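(* Let $A\in\mathbb{Z}^{d\times n}$ be totally unimodular, $\mathbf{b}\in\mathbb{Z}^d$, $\mathbf{c}\in\mathbb{Z}^n$, $\mathbf{u}\in\mathbb{Z}_{\ge0}^n$, and consider the ILP $\min\{\mathbf{c}^\top\mathbf{x} : A\mathbf{x}=\mathbf{b},\ \mathbf{0}\le\mathbf{x}\le\mathbf{u},\ \mathbf{x}\in\mathbb{Z}^n\}$. Let $m$ be the number of distinct positive values of $-\mathbf{c}^\top\mathbf{z}/\|\mathbf{z}\|_1$ as $\mathbf{z}$ ranges over $\mathcal{C}(A)$. Then from any feasible solution, every sequence of discrete steepest-descent augmentations (with respect to $\mathcal{G}(A)$) reaches an optimal solution after at most $n\cdot m$ augmentations.
   Context: The circuits $\mathcal{C}(A)$: for each nonzero $\mathbf{z}\in\ker(A)$ with inclusion-minimal support among nonzero vectors of $\ker(A)$, the line $\mathbb{R}\mathbf{z}$ contains exactly two nonzero integer points closest to the origin; $\mathcal{C}(A)$ is the set of all these vectors. For $\mathbf{v},\mathbf{w}\in\mathbb{R}^n$ write $\mathbf{v}\sqsubseteq\mathbf{w}$ if $v_iw_i\ge0$ and $|v_i|\le|w_i|$ for all $i$; the Graver basis $\mathcal{G}(A)$ is the set of $\sqsubseteq$-minimal elements of $(\ker(A)\cap\mathbb{Z}^n)\setminus\{\mathbf{0}\}$. Discrete steepest-descent augmentation (ILP): given a feasible $\mathbf{x}_k$, choose $\mathbf{z}\in\mathcal{G}(A)$ maximizing $-\mathbf{c}^\top\mathbf{z}/\|\mathbf{z}\|_1$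 among all $\mathbf{z}\in\mathcal{G}(A)$ with $\mathbf{x}_k+\mathbf{z}$ feasible; if this maximum is positive, let $\alpha$ be the largest integer with $\mathbf{x}_k+\alpha\mathbf{z}$ feasible and set $\mathbf{x}_{k+1}:=\mathbf{x}_k+\alpha\mathbf{z}$, otherwise stop. *)

theory Defs
  imports "Jordan_Normal_Form.Determinant" "Jordan_Normal_Form.DL_Submatrix"
begin

definition totally_unimodular :: "int mat \<Rightarrow> bool" where
  "totally_unimodular A \<longleftrightarrow>
     (\<forall>I J. I \<subseteq> {..<dim_row A} \<longrightarrow> J \<subseteq> {..<dim_col A} \<longrightarrow> card I = card J \<longrightarrow>
        det (submatrix A I J) \<in> {-1, 0, 1})"

definition supp :: "'a::zero vec \<Rightarrow> nat set" where
  "supp z = {j. j < dim_vec z \<and> z $ j \<noteq> 0}"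

definition l1norm :: "int vec \<Rightarrow> int" where
  "l1norm z = (\<Sum>j<dim_vec z. \<bar>z $ j\<bar>)"

definition real_ker :: "int mat \<Rightarrow> real vec set" where
  "real_ker A = {z. dim_vec z = dim_col A \<and> map_mat real_of_int A *\<^sub>v z = 0\<^sub>v (dim_row A)}"

definition int_ker :: "int mat \<Rightarrow> int vec set" where
  "int_ker A = {z. dim_vec z = dim_col A \<and> A *\<^sub>v z = 0\<^sub>v (dim_row A)}"

definition on_line :: "int vec \<Rightarrow> real vec \<Rightarrow> bool" where
  "on_line g z \<longleftrightarrow> dim_vec g = dim_vec z \<and> (\<exists>t::real. \<forall>j<dim_vec z. real_of_int (g $ j) = t * z $ j)"

text \<open>Circuits: for each nonzero kernel vector with inclusion-minimal support, the nonzero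
  integer points on its line that are closest to the origin (all norms on a line are
  proportional; we measure with the l1 norm).\<close>
definition circuits :: "int mat \<Rightarrow> int vec set" where
  "circuits A = {g. \<exists>z \<in> real_ker A. z \<noteq> 0\<^sub>v (dim_col A) \<and>
        (\<forall>y \<in> real_ker A. y \<noteq> 0\<^sub>v (dim_col A) \<longrightarrow> \<not> (supp y \<subset> supp z)) \<and>
        on_line g z \<and> g \<noteq> 0\<^sub>v (dim_col A) \<and>
        (\<forall>h. on_line h z \<longrightarrow> h \<noteq> 0\<^sub>v (dim_col A) \<longrightarrow> l1norm g \<le> l1norm h)}"

definition conformal_le :: "int vec \<Rightarrow> int vec \<Rightarrow> bool" (infix "\<sqsubseteq>" 50) where
  "v \<sqsubseteq> w \<longleftrightarrow> dim_vec v = dim_vec w \<and>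
     (\<forall>i<dim_vec w. v $ i * w $ i \<ge> 0 \<and> \<bar>v $ i\<bar> \<le> \<bar>w $ i\<bar>)"

definition graver :: "int mat \<Rightarrow> int vec set" where
  "graver A = {z. z \<in> int_ker A - {0\<^sub>v (dim_col A)} \<and>
       (\<forall>y \<in> int_ker A - {0\<^sub>v (dim_col A)}. y \<sqsubseteq> z \<longrightarrow> y = z)}"

definition feasible :: "int mat \<Rightarrow> int vec \<Rightarrow> int vec \<Rightarrow> int vec \<Rightarrow> bool" where
  "feasible A b u x \<longleftrightarrow> dim_vec x = dim_col A \<and> A *\<^sub>v x = b \<and>
     (\<forall>i<dim_col A. 0 \<le> x $ i \<and> x $ i \<le> u $ i)"

definition optimal :: "int mat \<Rightarrow> int vec \<Rightarrow> int vec \<Rightarrow> int vec \<Rightarrow> int vec \<Rightarrow> bool" where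
  "optimal A b c u x \<longleftrightarrow> feasible A b u x \<and> (\<forall>y. feasible A b u y \<longrightarrow> c \<bullet> x \<le> c \<bullet> y)"

definition sd_ratio :: "int vec \<Rightarrow> int vec \<Rightarrow> real" where
  "sd_ratio c z = - real_of_int (c \<bullet> z) / real_of_int (l1norm z)"

definition sd_step :: "int mat \<Rightarrow> int vec \<Rightarrow> int vec \<Rightarrow> int vec \<Rightarrow> int vec \<Rightarrow> int vec \<Rightarrow> bool" where
  "sd_step A b c u x x' \<longleftrightarrow> feasible A b u x \<and>
     (\<exists>z \<in> graver A. feasible A b u (x + z) \<and>
        (\<forall>g \<in> graver A. feasible A b u (x + g) \<longrightarrow> sd_ratio c g \<le> sd_ratio c z) \<and>
        sd_ratio c z > 0 \<and>
        (\<exists>\<alpha>::int. feasible A b u (x + of_int \<alpha> \<cdot>\<^sub>v z) \<and>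
           (\<forall>\<beta>::int. feasible A b u (x + of_int \<beta> \<cdot>\<^sub>v z) \<longrightarrow> \<beta> \<le> \<alpha>) \<and>
           x' = x + of_int \<alpha> \<cdot>\<^sub>v z))"

definition sd_stops :: "int mat \<Rightarrow> int vec \<Rightarrow> int vec \<Rightarrow> int vec \<Rightarrow> int vec \<Rightarrow> bool" where
  "sd_stops A b c u x \<longleftrightarrow>
     \<not> (\<exists>z \<in> graver A. feasible A b u (x + z) \<and> sd_ratio c z > 0)"

end

theory Submission
  imports Defs
begin

text \<open>By total unimodularity every Graver element is a circuit with entries in {-1, 0, 1}: Cramer's
  rule on the support of a circuit produces a unit vector on its line. Hence the directions chosen by
  the method take at most m distinct positive ratios. Peeling Graver elements off a feasible step in
  conformal order shows that the steepest ratio at x bounds -(c \<bullet> w) / l1norm w for every feasible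
  direction w at x; so the ratios never increase, and a point where the method stops is optimal.
  While the ratio stays constant, the accumulated displacement attains this bound, which forces it to
  be conformal to the next direction. Every step of maximal length blocks a coordinate in the support
  of its (unit) direction, and by conformality this coordinate is not touched again while the ratio is
  constant. So at most n steps share a ratio, and there are at most n m steps.\<close>

section \<open>Vectors, kernels and feasibility\<close>

lemma scalar_prod_conv_sum: "dim_vec v = n \<Longrightarrow> c \<bullet> v = (\<Sum>i<n. c $ i * v $ i)"
  by (simp add: scalar_prod_def atLeast0LessThan)

lemma scalar_prod_lincomb:
  fixes w :: "'a::comm_ring vec"
  assumes "dim_vec w = n" "dim_vec v = n" "dim_vec g = n" "\<forall>i<n. w $ i = v $ i + a * g $ i"
  shows "c \<bullet> w = c \<bullet> v + a * (c \<bullet> g)"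
  using assms by (simp add: scalar_prod_conv_sum[of _ n] algebra_simps sum.distrib sum_distrib_left)

lemma l1norm_conv_sum: "dim_vec v = n \<Longrightarrow> l1norm v = (\<Sum>i<n. \<bar>v $ i\<bar>)"
  by (simp add: l1norm_def)

lemma l1norm_nonneg: "l1norm v \<ge> 0"
  by (simp add: l1norm_def sum_nonneg)

lemma l1norm_pos:
  assumes "dim_vec v = n" "v \<noteq> 0\<^sub>v n"
  shows "l1norm v > 0"
proof -
  obtain j where "j < n" "v $ j \<noteq> 0" using assms by (metis eq_vecI index_zero_vec(1) index_zero_vec(2))
  then have "(\<Sum>j<n. \<bar>v $ j\<bar>) > 0" by (intro sum_pos2[of _ j]) auto
  then show ?thesis using assms(1) by (simp add: l1norm_def)
qed

lemma l1norm_smult: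
  assumes "dim_vec h = n" "dim_vec g = n" "\<forall>j<n. h $ j = k * g $ j"
  shows "l1norm h = \<bar>k\<bar> * l1norm g"
  using assms by (simp add: l1norm_def sum_distrib_left abs_mult)

lemma l1norm_lincomb_le:
  assumes "dim_vec w = n" "dim_vec v = n" "dim_vec g = n" "\<forall>i<n. w $ i = v $ i + a * g $ i" "a \<ge> 0"
  shows "l1norm w \<le> l1norm v + a * l1norm g"
proof -
  have "l1norm w = (\<Sum>i<n. \<bar>v $ i + a * g $ i\<bar>)" using assms by (simp add: l1norm_conv_sum[of _ n])
  also have "\<dots> \<le> (\<Sum>i<n. \<bar>v $ i\<bar> + a * \<bar>g $ i\<bar>)"
    by (rule sum_mono) (use assms(5) in \<open>simp add: abs_mult abs_triangle_ineq[THEN order_trans]\<close>)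
  also have "\<dots> = l1norm v + a * l1norm g"
    using assms by (simp add: l1norm_conv_sum[of _ n] sum.distrib sum_distrib_left)
  finally show ?thesis .
qed

lemma l1norm_lincomb_eq_imp_conformal:
  assumes "dim_vec w = n" "dim_vec v = n" "dim_vec g = n" "\<forall>i<n. w $ i = v $ i + a * g $ i" "a > 0"
    and eq: "l1norm w = l1norm v + a * l1norm g"
  shows "\<forall>i<n. v $ i * g $ i \<ge> 0"
proof (rule ccontr)
  assume "\<not> ?thesis"
  then obtain i0 where i0: "i0 < n" "v $ i0 * g $ i0 < 0" by auto
  have le: "\<bar>v $ i + a * g $ i\<bar> \<le> \<bar>v $ i\<bar> + a * \<bar>g $ i\<bar>" for i
    using assms(5) by (simp add: abs_mult abs_triangle_ineq[THEN order_trans])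
  have "\<bar>v $ i0 + a * g $ i0\<bar> < \<bar>v $ i0\<bar> + a * \<bar>g $ i0\<bar>"
    using i0(2) assms(5) by (auto simp: abs_if mult_less_0_iff zero_less_mult_iff)
  then have "(\<Sum>i<n. \<bar>v $ i + a * g $ i\<bar>) < (\<Sum>i<n. \<bar>v $ i\<bar> + a * \<bar>g $ i\<bar>)"
    using le i0(1) by (intro sum_strict_mono_ex1) auto
  moreover have "l1norm w = (\<Sum>i<n. \<bar>v $ i + a * g $ i\<bar>)" using assms by (simp add: l1norm_conv_sum[of _ n])
  moreover have "(\<Sum>i<n. \<bar>v $ i\<bar> + a * \<bar>g $ i\<bar>) = l1norm v + a * l1norm g"
    using assms by (simp add: l1norm_conv_sum[of _ n] sum.distrib sum_distrib_left)
  ultimately show False using eq by simp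
qed

lemma mult_mat_vec_nth:
  assumes "M \<in> carrier_mat d n" "dim_vec v = n" "i < d"
  shows "(M *\<^sub>v v) $ i = (\<Sum>j<n. M $$ (i,j) * v $ j)"
  using assms by (auto simp: mult_mat_vec_def scalar_prod_def atLeast0LessThan row_def intro!: sum.cong)

lemma real_ker_lincomb:
  assumes A: "A \<in> carrier_mat d n" and x: "x \<in> real_ker A" and y: "y \<in> real_ker A"
  shows "a \<cdot>\<^sub>v x + b \<cdot>\<^sub>v y \<in> real_ker A"
proof -
  let ?B = "map_mat real_of_int A" and ?v = "a \<cdot>\<^sub>v x + b \<cdot>\<^sub>v y"
  have B: "?B \<in> carrier_mat d n" using A by simp
  have dx: "dim_vec x = n" and Bx: "?B *\<^sub>v x = 0\<^sub>v d" using x A by (auto simp: real_ker_def)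
  have dy: "dim_vec y = n" and By: "?B *\<^sub>v y = 0\<^sub>v d" using y A by (auto simp: real_ker_def)
  have dv: "dim_vec ?v = n" using dx dy by simp
  have "?B *\<^sub>v ?v = 0\<^sub>v d"
  proof (rule eq_vecI)
    fix i assume "i < dim_vec (0\<^sub>v d :: real vec)"
    then have i: "i < d" by simp
    have "(?B *\<^sub>v ?v) $ i = (\<Sum>j<n. a * (?B $$ (i,j) * x $ j) + b * (?B $$ (i,j) * y $ j))"
      using dx dy by (simp add: mult_mat_vec_nth[OF B dv i] algebra_simps)
    also have "\<dots> = a * (?B *\<^sub>v x) $ i + b * (?B *\<^sub>v y) $ i"
      by (simp add: sum.distrib sum_distrib_left mult_mat_vec_nth[OF B dx i] mult_mat_vec_nth[OF B dy i])
    finally show "(?B *\<^sub>v ?v) $ i = 0\<^sub>v d $ i" using Bx By i by simp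
  qed (use A in simp)
  then show ?thesis using dv A by (simp add: real_ker_def)
qed

lemma int_ker_imp_real_ker:
  assumes A: "A \<in> carrier_mat d n" and "g \<in> int_ker A"
  shows "map_vec real_of_int g \<in> real_ker A"
proof -
  have g: "dim_vec g = n" "A *\<^sub>v g = 0\<^sub>v d" using assms by (auto simp: int_ker_def)
  have "map_mat real_of_int A *\<^sub>v map_vec real_of_int g = map_vec real_of_int (A *\<^sub>v g)"
    by (rule of_int_hom.mult_mat_vec_hom[OF A carrier_vecI[OF g(1)], symmetric])
  also have "\<dots> = 0\<^sub>v d" unfolding g(2) by simp
  finally show ?thesis using A g by (simp add: real_ker_def)
qed

lemma int_ker_smult:
  assumes A: "A \<in> carrier_mat d n" and "g \<in> int_ker A"
  shows "k \<cdot>\<^sub>v g \<in> int_ker A"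
proof -
  have g: "dim_vec g = n" "A *\<^sub>v g = 0\<^sub>v d" using assms by (auto simp: int_ker_def)
  have "A *\<^sub>v (k \<cdot>\<^sub>v g) = k \<cdot>\<^sub>v (A *\<^sub>v g)"
    using A g(1) by (intro eq_vecI) (auto simp: scalar_prod_smult_right)
  also have "\<dots> = 0\<^sub>v d" unfolding g(2) by (intro eq_vecI) auto
  finally show ?thesis using A g by (simp add: int_ker_def)
qed

lemma int_ker_diff:
  assumes A: "A \<in> carrier_mat d n" and "g \<in> int_ker A" "h \<in> int_ker A"
  shows "g - h \<in> int_ker A"
proof -
  have g: "dim_vec g = n" "A *\<^sub>v g = 0\<^sub>v d" and h: "dim_vec h = n" "A *\<^sub>v h = 0\<^sub>v d"
    using assms by (auto simp: int_ker_def)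
  have "A *\<^sub>v (g - h) = 0\<^sub>v d - 0\<^sub>v d"
    unfolding mult_minus_distrib_mat_vec[OF A carrier_vecI[OF g(1)] carrier_vecI[OF h(1)]] g(2) h(2) ..
  also have "\<dots> = 0\<^sub>v d" by (rule minus_cancel_vec) simp
  finally show ?thesis using A g h by (simp add: int_ker_def)
qed

lemma feasible_diff_in_int_ker:
  assumes A: "A \<in> carrier_mat d n" and "feasible A b u x" "feasible A b u y"
  shows "y - x \<in> int_ker A"
proof -
  have x: "dim_vec x = n" "A *\<^sub>v x = b" and y: "dim_vec y = n" "A *\<^sub>v y = b"
    using assms by (auto simp: feasible_def)
  have b: "b \<in> carrier_vec d" using A x by (metis carrier_vecI dim_mult_mat_vec carrier_matD(1))
  have "A *\<^sub>v (y - x) = b - b"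
    unfolding mult_minus_distrib_mat_vec[OF A carrier_vecI[OF y(1)] carrier_vecI[OF x(1)]] x(2) y(2) ..
  also have "\<dots> = 0\<^sub>v d" by (rule minus_cancel_vec[OF b])
  finally show ?thesis using A x y by (simp add: int_ker_def)
qed

lemma feasible_add_int_ker_iff:
  assumes A: "A \<in> carrier_mat d n" and "feasible A b u x" and "z \<in> int_ker A"
  shows "feasible A b u (x + z) \<longleftrightarrow> (\<forall>i<n. 0 \<le> x $ i + z $ i \<and> x $ i + z $ i \<le> u $ i)"
proof -
  have x: "dim_vec x = n" "A *\<^sub>v x = b" and z: "dim_vec z = n" "A *\<^sub>v z = 0\<^sub>v d"
    using assms by (auto simp: feasible_def int_ker_def)
  have b: "b \<in> carrier_vec d" using A x by (metis carrier_vecI dim_mult_mat_vec carrier_matD(1))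
  have "A *\<^sub>v (x + z) = b + 0\<^sub>v d"
    unfolding mult_add_distrib_mat_vec[OF A carrier_vecI[OF x(1)] carrier_vecI[OF z(1)]] x(2) z(2) ..
  also have "\<dots> = b" by (rule right_zero_vec[OF b])
  finally have "A *\<^sub>v (x + z) = b" .
  then show ?thesis using A x z by (simp add: feasible_def)
qed

section \<open>The conformal order and Graver bases\<close>

lemma conformal_le_refl: "v \<sqsubseteq> v"
  by (simp add: conformal_le_def)

lemma conformal_le_trans: "u \<sqsubseteq> v \<Longrightarrow> v \<sqsubseteq> w \<Longrightarrow> u \<sqsubseteq> w"
  unfolding conformal_le_def
  by (auto simp: zero_le_mult_iff abs_if split: if_splits) (smt (verit))+

lemma conformal_le_l1norm_less:
  assumes "v \<sqsubseteq> w" "v \<noteq> w"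
  shows "l1norm v < l1norm w"
proof -
  let ?n = "dim_vec w"
  have dv: "dim_vec v = ?n" and e: "\<And>i. i < ?n \<Longrightarrow> v $ i * w $ i \<ge> 0 \<and> \<bar>v $ i\<bar> \<le> \<bar>w $ i\<bar>"
    using assms(1) by (auto simp: conformal_le_def)
  obtain i where i: "i < ?n" "v $ i \<noteq> w $ i" using assms(2) dv by (metis eq_vecI)
  have "\<bar>v $ i\<bar> < \<bar>w $ i\<bar>" using e[OF i(1)] i(2) by (auto simp: zero_le_mult_iff abs_if split: if_splits)
  then have "(\<Sum>j<?n. \<bar>v $ j\<bar>) < (\<Sum>j<?n. \<bar>w $ j\<bar>)"
    using e i by (intro sum_strict_mono_ex1) auto
  then show ?thesis using dv by (simp add: l1norm_def)
qed

lemma conformal_le_diff: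
  assumes "v \<sqsubseteq> w"
  shows "w - v \<sqsubseteq> w" and "l1norm w = l1norm v + l1norm (w - v)"
proof -
  let ?n = "dim_vec w"
  have dv: "dim_vec v = ?n" and e: "\<And>i. i < ?n \<Longrightarrow> v $ i * w $ i \<ge> 0 \<and> \<bar>v $ i\<bar> \<le> \<bar>w $ i\<bar>"
    using assms by (auto simp: conformal_le_def)
  have entry: "(w $ i - v $ i) * w $ i \<ge> 0 \<and> \<bar>w $ i - v $ i\<bar> \<le> \<bar>w $ i\<bar>
      \<and> \<bar>w $ i\<bar> = \<bar>v $ i\<bar> + \<bar>w $ i - v $ i\<bar>" if "i < ?n" for i
    using e[OF that] by (auto simp: zero_le_mult_iff abs_if split: if_splits)
  show "w - v \<sqsubseteq> w" unfolding conformal_le_def using dv entry by auto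
  have "l1norm w = (\<Sum>i<?n. \<bar>v $ i\<bar> + \<bar>(w - v) $ i\<bar>)"
    unfolding l1norm_def by (rule sum.cong) (use dv entry in auto)
  also have "\<dots> = l1norm v + l1norm (w - v)" using dv by (simp add: sum.distrib l1norm_def)
  finally show "l1norm w = l1norm v + l1norm (w - v)" .
qed

lemma feasible_add_conformal:
  assumes A: "A \<in> carrier_mat d n" and x: "feasible A b u x"
    and w: "w \<in> int_ker A" "feasible A b u (x + w)" and v: "v \<in> int_ker A" "v \<sqsubseteq> w"
  shows "feasible A b u (x + v)"
proof -
  have box: "\<forall>i<n. 0 \<le> x $ i + w $ i \<and> x $ i + w $ i \<le> u $ i"
    using w feasible_add_int_ker_iff[OF A x w(1)] by blast
  have "dim_vec w = n" using w(1) A by (simp add: int_ker_def)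
  then have conf: "\<forall>i<n. v $ i * w $ i \<ge> 0 \<and> \<bar>v $ i\<bar> \<le> \<bar>w $ i\<bar>" using v(2) by (simp add: conformal_le_def)
  have "0 \<le> x $ i + v $ i \<and> x $ i + v $ i \<le> u $ i" if i: "i < n" for i
  proof -
    have "0 \<le> x $ i + w $ i \<and> x $ i + w $ i \<le> u $ i" "0 \<le> x $ i \<and> x $ i \<le> u $ i"
      "v $ i * w $ i \<ge> 0 \<and> \<bar>v $ i\<bar> \<le> \<bar>w $ i\<bar>"
      using box conf x A i by (auto simp: feasible_def)
    then show ?thesis by (auto simp: zero_le_mult_iff abs_if split: if_splits)
  qed
  then show ?thesis using feasible_add_int_ker_iff[OF A x v(1)] by blast
qed

lemma sd_ratio_le_iff:
  assumes "l1norm g > 0"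
  shows "sd_ratio c g \<le> r \<longleftrightarrow> - real_of_int (c \<bullet> g) \<le> r * real_of_int (l1norm g)"
  unfolding sd_ratio_def by (rule pos_divide_le_eq) (use assms in simp)

lemma graver_nonzero:
  assumes A: "A \<in> carrier_mat d n" and "g \<in> graver A"
  shows "g \<in> int_ker A" "dim_vec g = n" "g \<noteq> 0\<^sub>v n" "l1norm g > 0"
proof -
  show g: "g \<in> int_ker A" "g \<noteq> 0\<^sub>v n" using assms by (auto simp: graver_def)
  then show "dim_vec g = n" using A by (simp add: int_ker_def)
  then show "l1norm g > 0" using l1norm_pos g(2) by blast
qed

lemma graver_conformal_below:
  assumes A: "A \<in> carrier_mat d n"
  shows "w \<in> int_ker A \<Longrightarrow> w \<noteq> 0\<^sub>v n \<Longrightarrow> \<exists>g\<in>graver A. g \<sqsubseteq> w"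
proof (induction "nat (l1norm w)" arbitrary: w rule: less_induct)
  case less
  show ?case
  proof (cases "w \<in> graver A")
    case True
    then show ?thesis using conformal_le_refl by blast
  next
    case False
    then obtain v where v: "v \<in> int_ker A" "v \<noteq> 0\<^sub>v n" "v \<sqsubseteq> w" "v \<noteq> w"
      using less.prems A by (auto simp: graver_def)
    have "nat (l1norm v) < nat (l1norm w)"
      using conformal_le_l1norm_less[OF v(3,4)] l1norm_nonneg[of v] by simp
    then obtain g where "g \<in> graver A" "g \<sqsubseteq> v" using less.hyps v(1,2) by blast
    then show ?thesis using conformal_le_trans v(3) by blast
  qed
qed

text \<open>Peeling off Graver elements conformal to a feasible direction keeps every partial sum
  feasible, so a bound on the ratio of feasible Graver directions bounds every feasible direction.\<close>
lemma graver_ratio_bound: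
  assumes A: "A \<in> carrier_mat d n" and c: "dim_vec c = n" and x: "feasible A b u x"
    and r: "\<forall>g\<in>graver A. feasible A b u (x + g) \<longrightarrow> sd_ratio c g \<le> r"
  shows "w \<in> int_ker A \<Longrightarrow> feasible A b u (x + w) \<Longrightarrow>
    - real_of_int (c \<bullet> w) \<le> r * real_of_int (l1norm w)"
proof (induction "nat (l1norm w)" arbitrary: w rule: less_induct)
  case less
  have dw: "dim_vec w = n" using less.prems A by (simp add: int_ker_def)
  show ?case
  proof (cases "w = 0\<^sub>v n")
    case True
    then show ?thesis using c by (simp add: l1norm_def scalar_prod_conv_sum[of _ n])
  next
    case False
    obtain g where g: "g \<in> graver A" "g \<sqsubseteq> w" using graver_conformal_below[OF A less.prems(1) False] by blast
    note g_props = graver_nonzero[OF A g(1)]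
    have "feasible A b u (x + g)" using feasible_add_conformal[OF A x less.prems g_props(1) g(2)] .
    then have "sd_ratio c g \<le> r" using r g(1) by blast
    then have bound_g: "- real_of_int (c \<bullet> g) \<le> r * real_of_int (l1norm g)"
      using sd_ratio_le_iff[OF g_props(4)] by blast
    have rest: "w - g \<in> int_ker A" "feasible A b u (x + (w - g))"
      using int_ker_diff[OF A less.prems(1) g_props(1)]
        feasible_add_conformal[OF A x less.prems _ conformal_le_diff(1)[OF g(2)]] by auto
    have split: "l1norm w = l1norm g + l1norm (w - g)" by (rule conformal_le_diff(2)[OF g(2)])
    then have "nat (l1norm (w - g)) < nat (l1norm w)" using g_props(4) l1norm_nonneg[of "w - g"] by simp
    then have bound_rest: "- real_of_int (c \<bullet> (w - g)) \<le> r * real_of_int (l1norm (w - g))"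
      using less.hyps rest by blast
    have "c \<bullet> w = c \<bullet> g + c \<bullet> (w - g)"
      using dw g_props(2) c by (simp add: scalar_prod_conv_sum[of _ n] sum.distrib[symmetric] algebra_simps)
    then show ?thesis using bound_g bound_rest split by (simp add: algebra_simps)
  qed
qed

lemma sd_stops_imp_optimal:
  assumes A: "A \<in> carrier_mat d n" and c: "dim_vec c = n" and x: "feasible A b u x"
    and stops: "sd_stops A b c u x"
  shows "optimal A b c u x"
proof -
  have r: "\<forall>g\<in>graver A. feasible A b u (x + g) \<longrightarrow> sd_ratio c g \<le> 0"
    using stops unfolding sd_stops_def by (meson not_less)
  have "c \<bullet> x \<le> c \<bullet> y" if y: "feasible A b u y" for y
  proof -
    have dx: "dim_vec x = n" and dy: "dim_vec y = n" using x y A by (auto simp: feasible_def)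
    have "x + (y - x) = y" using dx dy by (intro eq_vecI) auto
    then have "- real_of_int (c \<bullet> (y - x)) \<le> 0"
      using graver_ratio_bound[OF A c x r feasible_diff_in_int_ker[OF A x y]] y by simp
    moreover have "c \<bullet> (y - x) = c \<bullet> y - c \<bullet> x"
      using dx dy by (simp add: scalar_prod_conv_sum[of _ n] sum_subtractf algebra_simps)
    ultimately show ?thesis by simp
  qed
  then show ?thesis using x by (simp add: optimal_def)
qed

section \<open>Minors indexed by lists\<close>

definition submat :: "'a mat \<Rightarrow> nat list \<Rightarrow> nat list \<Rightarrow> 'a mat" where
  "submat A rs cs = mat (length rs) (length cs) (\<lambda>(i,j). A $$ (rs!i, cs!j))"

definition remove_nth :: "nat \<Rightarrow> 'b list \<Rightarrow> 'b list" where
  "remove_nth k xs = take k xs @ drop (Suc k) xs"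

lemma submat_carrier[simp]: "submat A rs cs \<in> carrier_mat (length rs) (length cs)"
  by (simp add: submat_def)

lemma dim_submat[simp]: "dim_row (submat A rs cs) = length rs" "dim_col (submat A rs cs) = length cs"
  by (simp_all add: submat_def)

lemma index_submat[simp]: "i < length rs \<Longrightarrow> j < length cs \<Longrightarrow> submat A rs cs $$ (i,j) = A $$ (rs!i, cs!j)"
  by (simp add: submat_def)

lemma length_remove_nth[simp]: "k < length xs \<Longrightarrow> length (remove_nth k xs) = length xs - 1"
  by (simp add: remove_nth_def)

lemma nth_remove_nth:
  "k < length xs \<Longrightarrow> j < length xs - 1 \<Longrightarrow> remove_nth k xs ! j = xs ! (if j < k then j else Suc j)"
  by (auto simp: remove_nth_def nth_append min_def)

lemma set_remove_nth: "set (remove_nth k xs) \<subseteq> set xs"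
  unfolding remove_nth_def by (auto dest: in_set_takeD in_set_dropD)

lemma distinct_remove_nth: "distinct xs \<Longrightarrow> distinct (remove_nth k xs)"
  unfolding remove_nth_def
  by (simp add: set_take_disj_set_drop_if_distinct)

lemma remove_nth_last: "length xs = Suc m \<Longrightarrow> remove_nth m xs = take m xs"
  by (simp add: remove_nth_def)

lemma mat_delete_submat:
  assumes "length cs = Suc (length rs)" "k < length cs"
  shows "mat_delete (submat A (rs@[i]) cs) (length rs) k = submat A rs (remove_nth k cs)"
  using assms by (intro eq_matI) (auto simp: mat_delete_def nth_append nth_remove_nth)

definition cofactor_vec :: "'a::comm_ring_1 mat \<Rightarrow> nat list \<Rightarrow> nat list \<Rightarrow> 'a vec" where
  "cofactor_vec A rs cs = vec (length cs) (\<lambda>k. (-1)^(length rs + k) * det (submat A rs (remove_nth k cs)))"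

lemma det_submat_snoc:
  assumes "length cs = Suc (length rs)"
  shows "det (submat A (rs@[i]) cs) = (\<Sum>k<length cs. A $$ (i, cs!k) * cofactor_vec A rs cs $ k)"
proof -
  have c: "submat A (rs@[i]) cs \<in> carrier_mat (length cs) (length cs)" using submat_carrier[of A "rs@[i]" cs] assms by simp
  have "det (submat A (rs@[i]) cs)
      = (\<Sum>k<length cs. submat A (rs@[i]) cs $$ (length rs,k) * cofactor (submat A (rs@[i]) cs) (length rs) k)"
    by (rule laplace_expansion_row[OF c]) (use assms in auto)
  also have "\<dots> = (\<Sum>k<length cs. A $$ (i, cs!k) * cofactor_vec A rs cs $ k)"
    by (rule sum.cong) (use assms in \<open>auto simp: cofactor_def mat_delete_submat cofactor_vec_def\<close>)
  finally show ?thesis .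
qed

lemma det_submat_repeated_row:
  assumes "i \<in> set rs" "length cs = Suc (length rs)"
  shows "det (submat A (rs@[i]) cs) = (0::'a::comm_ring_1)"
proof -
  obtain q where q: "q < length rs" "rs ! q = i" using assms(1) by (metis in_set_conv_nth)
  show ?thesis
    by (rule det_identical_rows[of _ "length cs" q "length rs"]) 
       (use assms q in \<open>auto intro!: eq_vecI simp: nth_append\<close>)
qed

lemma cofactor_vec_last:
  assumes "length cs = Suc (length rs)"
  shows "cofactor_vec A rs cs $ length rs = det (submat A rs (take (length rs) cs))"
  using assms by (simp add: cofactor_vec_def remove_nth_last)

lemma mult_submat_nth:
  assumes "i < length rs" "v \<in> carrier_vec (length cs)"
  shows "(submat A rs cs *\<^sub>v v) $ i = (\<Sum>k<length cs. A $$ (rs!i, cs!k) * v $ k)"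
  using assms by (auto simp: mult_mat_vec_def scalar_prod_def atLeast0LessThan submat_def row_def intro!: sum.cong)

lemma mult_submat_upt:
  assumes "i < d" "v \<in> carrier_vec (length cs)"
  shows "(submat A [0..<d] cs *\<^sub>v v) $ i = (\<Sum>k<length cs. A $$ (i, cs!k) * v $ k)"
  using mult_submat_nth[of i "[0..<d]" v cs A] assms by simp

lemma rank_in_list_permutes:
  fixes xs :: "nat list"
  assumes dist: "distinct xs"
  defines "p \<equiv> (\<lambda>i. if i < length xs then card {a\<in>set xs. a < xs!i} else i)"
  shows "p permutes {0..<length xs}" and "\<And>i. i < length xs \<Longrightarrow> pick (set xs) (p i) = xs ! i"
    and "\<And>i. i < length xs \<Longrightarrow> p i < length xs"
proof -
  show pk: "\<And>i. i < length xs \<Longrightarrow> pick (set xs) (p i) = xs ! i"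
    unfolding p_def by (simp add: pick_card_in_set)
  show lt: "\<And>i. i < length xs \<Longrightarrow> p i < length xs"
  proof -
    fix i assume i: "i < length xs"
    have m: "xs!i \<in> set xs" using i by simp
    have "{a\<in>set xs. a < xs!i} \<subset> set xs" using m by blast
    then have "card {a\<in>set xs. a < xs!i} < card (set xs)" by (intro psubset_card_mono) simp_all
    moreover have "card (set xs) = length xs" using dist by (rule distinct_card)
    ultimately show "p i < length xs" using i unfolding p_def by simp
  qed
  have inj: "inj_on p {0..<length xs}"
  proof (rule inj_onI)
    fix i j assume "i \<in> {0..<length xs}" "j \<in> {0..<length xs}" "p i = p j"
    then have "xs ! i = xs ! j" using pk \<open>i \<in> _\<close> \<open>j \<in> _\<close> by (metis atLeastLessThan_iff)
    then show "i = j" using dist \<open>i \<in> _\<close> \<open>j \<in> _\<close> by (simp add: nth_eq_iff_index_eq)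
  qed
  have "p ` {0..<length xs} = {0..<length xs}"
    by (rule endo_inj_surj) (use lt inj in auto)
  then have bij: "bij_betw p {0..<length xs} {0..<length xs}" using inj by (simp add: bij_betw_def)
  have st: "\<And>x. x \<notin> {0..<length xs} \<Longrightarrow> p x = x" by (simp add: p_def)
  show "p permutes {0..<length xs}" using bij_imp_permutes[OF bij st] .
qed

lemma det_permute_rows_cols:
  fixes S :: "'a::comm_ring_1 mat"
  assumes S: "S \<in> carrier_mat t t" and p: "p permutes {0..<t}" and q: "q permutes {0..<t}"
  shows "det (mat t t (\<lambda>(i,j). S $$ (p i, q j))) = signof p * signof q * det S"
proof -
  define M1 where "M1 = mat t t (\<lambda>(i,j). S $$ (i, q j))"
  have M1: "M1 \<in> carrier_mat t t" by (simp add: M1_def)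
  have qi: "\<And>j. j < t \<Longrightarrow> q j < t" using p q by (meson atLeastLessThan_iff permutes_in_image zero_le)
  have pi: "\<And>j. j < t \<Longrightarrow> p j < t" using p by (meson atLeastLessThan_iff permutes_in_image zero_le)
  have "mat t t (\<lambda>(i,j). S $$ (p i, q j)) = mat t t (\<lambda>(i,j). M1 $$ (p i, j))"
    by (rule eq_matI) (auto simp: M1_def pi)
  then have 1: "det (mat t t (\<lambda>(i,j). S $$ (p i, q j))) = signof p * det M1"
    using det_permute_rows[OF M1 p] by simp
  have "det M1 = det (transpose_mat M1)" using det_transpose[OF M1] by simp
  also have "transpose_mat M1 = mat t t (\<lambda>(i,j). (transpose_mat S) $$ (q i, j))"
    by (rule eq_matI) (use S in \<open>auto simp: M1_def qi\<close>)
  also have "det \<dots> = signof q * det (transpose_mat S)"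
    by (rule det_permute_rows[OF _ q]) (use S in auto)
  also have "det (transpose_mat S) = det S" using det_transpose[OF S] by simp
  finally show ?thesis using 1 by simp
qed

text \<open>Total unimodularity speaks about minors indexed by sets; a minor indexed by distinct lists
  differs from such a minor by a permutation of its rows and of its columns.\<close>
lemma det_submat_unimodular:
  assumes A: "A \<in> carrier_mat d n" and tu: "totally_unimodular A"
    and dr: "distinct rs" and dc: "distinct cs" and sr: "set rs \<subseteq> {..<d}" and sc: "set cs \<subseteq> {..<n}"
    and len: "length rs = length cs"
  shows "det (submat A rs cs) \<in> {-1,0,1}"
proof -
  let ?I = "set rs" and ?J = "set cs" and ?t = "length rs"
  define p where "p = (\<lambda>i. if i < length rs then card {a\<in>set rs. a < rs!i} else i)"
  define q where "q = (\<lambda>i. if i < length cs then card {a\<in>set cs. a < cs!i} else i)"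
  have P: "p permutes {0..<length rs}" "\<And>i. i < length rs \<Longrightarrow> pick (set rs) (p i) = rs ! i"
    "\<And>i. i < length rs \<Longrightarrow> p i < length rs"
    using rank_in_list_permutes[OF dr] unfolding p_def by blast+
  have Q: "q permutes {0..<length cs}" "\<And>i. i < length cs \<Longrightarrow> pick (set cs) (q i) = cs ! i"
    "\<And>i. i < length cs \<Longrightarrow> q i < length cs"
    using rank_in_list_permutes[OF dc] unfolding q_def by blast+
  have cI: "{i. i < dim_row A \<and> i \<in> ?I} = ?I" using A sr by auto
  have cJ: "{i. i < dim_col A \<and> i \<in> ?J} = ?J" using A sc by auto
  define S where "S = submatrix A ?I ?J"
  have cdr: "card ?I = ?t" using dr by (rule distinct_card)
  have cdc: "card ?J = ?t" using dc len by (simp add: distinct_card)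
  have "dim_row S = ?t" unfolding S_def dim_submatrix cI cdr ..
  moreover have "dim_col S = ?t" unfolding S_def dim_submatrix cJ cdc ..
  ultimately have S: "S \<in> carrier_mat ?t ?t" by (intro carrier_matI)
  have h1: "?I \<subseteq> {..<dim_row A}" "?J \<subseteq> {..<dim_col A}" using sr sc A by auto
  have h2: "card ?I = card ?J" using dr dc len by (simp add: distinct_card)
  have "det S \<in> {-1,0,1}" using tu h1 h2 unfolding totally_unimodular_def S_def by blast
  have "submat A rs cs = mat ?t ?t (\<lambda>(i,j). S $$ (p i, q j))"
  proof (rule eq_matI)
    fix i j assume i: "i < dim_row (mat ?t ?t (\<lambda>(i,j). S $$ (p i, q j)))"
      and j: "j < dim_col (mat ?t ?t (\<lambda>(i,j). S $$ (p i, q j)))"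
    then have i': "i < ?t" and j': "j < length cs" using len by auto
    have "S $$ (p i, q j) = A $$ (pick ?I (p i), pick ?J (q j))"
      unfolding S_def by (rule submatrix_index) (use cI cJ P(3) Q(3) i' j' dr dc in \<open>auto simp: distinct_card\<close>)
    then show "submat A rs cs $$ (i,j) = mat ?t ?t (\<lambda>(i,j). S $$ (p i, q j)) $$ (i,j)"
      using P(2) Q(2) i' j' len by simp
  qed (use len in auto)
  then have "det (submat A rs cs) = signof p * signof q * det S"
    using det_permute_rows_cols[OF S P(1)] Q(1) len by simp
  moreover have "sign p \<in> {1,-1::int}" "sign q \<in> {1,-1::int}" by (simp_all add: sign_def)
  ultimately show ?thesis using \<open>det S \<in> _\<close> by auto
qed

definition independent_columns :: "'a::field mat \<Rightarrow> nat list \<Rightarrow> bool" where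
  "independent_columns B cs \<longleftrightarrow> (\<forall>v \<in> carrier_vec (length cs).
     submat B [0..<dim_row B] cs *\<^sub>v v = 0\<^sub>v (dim_row B) \<longrightarrow> v = 0\<^sub>v (length cs))"

lemma independent_columns_butlast:
  assumes indep: "independent_columns B (cs @ [c])"
  shows "independent_columns B cs"
  unfolding independent_columns_def
proof (intro ballI impI)
  let ?d = "dim_row B" and ?m = "length cs"
  fix v :: "'a vec" assume v: "v \<in> carrier_vec ?m" and z: "submat B [0..<?d] cs *\<^sub>v v = 0\<^sub>v ?d"
  define v' where "v' = vec (Suc ?m) (\<lambda>k. if k < ?m then v $ k else 0)"
  have v': "v' \<in> carrier_vec (length (cs @ [c]))" by (simp add: v'_def)
  have "submat B [0..<?d] (cs @ [c]) *\<^sub>v v' = 0\<^sub>v ?d"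
  proof (rule eq_vecI)
    fix i assume "i < dim_vec (0\<^sub>v ?d :: 'a vec)"
    then have i: "i < ?d" by simp
    have "(submat B [0..<?d] (cs @ [c]) *\<^sub>v v') $ i = (\<Sum>k<?m. B $$ (i, cs ! k) * v $ k)"
      using mult_submat_upt[OF i v'] by (simp add: v'_def nth_append)
    also have "\<dots> = (submat B [0..<?d] cs *\<^sub>v v) $ i" using mult_submat_upt[OF i v] by simp
    finally show "(submat B [0..<?d] (cs @ [c]) *\<^sub>v v') $ i = 0\<^sub>v ?d $ i" using z i by simp
  qed simp
  then have "v' = 0\<^sub>v (length (cs @ [c]))" using indep v' by (simp add: independent_columns_def)
  then have "v' $ k = 0" if "k < ?m" for k using that by simp
  then show "v = 0\<^sub>v ?m" using v by (intro eq_vecI) (auto simp: v'_def)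
qed

text \<open>Induction on the columns: if no appended row extended a nonsingular minor, the cofactors
  of the last row would give a nonzero kernel vector of the chosen columns.\<close>
lemma exists_nonsingular_submat:
  "independent_columns B cs \<Longrightarrow>
    \<exists>rs. distinct rs \<and> set rs \<subseteq> {..<dim_row B} \<and> length rs = length cs \<and> det (submat B rs cs) \<noteq> 0"
proof (induction cs rule: rev_induct)
  case Nil
  have "det (submat B [] []) = 1" by (rule det_dim_zero) (metis submat_carrier list.size(3))
  then show ?case by (intro exI[of _ "[]"]) simp
next
  case (snoc c cs)
  let ?d = "dim_row B"
  obtain rs where rs: "distinct rs" "set rs \<subseteq> {..<?d}" "length rs = length cs" "det (submat B rs cs) \<noteq> 0"
    using snoc.IH[OF independent_columns_butlast[OF snoc.prems]] by blast
  have len: "length (cs @ [c]) = Suc (length rs)" using rs by simp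
  have "\<exists>i<?d. det (submat B (rs @ [i]) (cs @ [c])) \<noteq> 0"
  proof (rule ccontr)
    assume "\<not> ?thesis"
    then have all0: "\<And>i. i < ?d \<Longrightarrow> det (submat B (rs @ [i]) (cs @ [c])) = 0" by auto
    define w where "w = cofactor_vec B rs (cs @ [c])"
    have w: "w \<in> carrier_vec (length (cs @ [c]))" by (simp add: w_def cofactor_vec_def)
    have "submat B [0..<?d] (cs @ [c]) *\<^sub>v w = 0\<^sub>v ?d"
    proof (rule eq_vecI)
      fix i assume "i < dim_vec (0\<^sub>v ?d :: 'a vec)"
      then have i: "i < ?d" by simp
      have "(submat B [0..<?d] (cs @ [c]) *\<^sub>v w) $ i = det (submat B (rs @ [i]) (cs @ [c]))"
        using mult_submat_upt[OF i w] det_submat_snoc[OF len, of B i] by (simp add: w_def)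
      then show "(submat B [0..<?d] (cs @ [c]) *\<^sub>v w) $ i = 0\<^sub>v ?d $ i" using all0[OF i] i by simp
    qed simp
    then have "w = 0\<^sub>v (length (cs @ [c]))" using snoc.prems w by (simp add: independent_columns_def)
    then have "w $ length rs = 0" using len by simp
    moreover have "w $ length rs = det (submat B rs cs)"
      using cofactor_vec_last[OF len, of B] rs(3) by (simp add: w_def)
    ultimately show False using rs(4) by simp
  qed
  then obtain i where i: "i < ?d" "det (submat B (rs @ [i]) (cs @ [c])) \<noteq> 0" by blast
  have "i \<notin> set rs" using det_submat_repeated_row[OF _ len, of i B] i(2) by auto
  then show ?case using rs i len by (intro exI[of _ "rs @ [i]"]) auto
qed

lemma sum_list_support:
  fixes f :: "nat \<Rightarrow> 'a::comm_monoid_add"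
  assumes "distinct cs" "set cs \<subseteq> {..<n}" "\<And>j. j < n \<Longrightarrow> j \<notin> set cs \<Longrightarrow> f j = 0"
  shows "(\<Sum>j<n. f j) = (\<Sum>k<length cs. f (cs!k))"
proof -
  have "(\<Sum>j<n. f j) = (\<Sum>j\<in>set cs. f j)"
    by (rule sum.mono_neutral_right) (use assms in auto)
  also have "\<dots> = sum_list (map f cs)" using assms(1) by (simp add: sum_list_distinct_conv_sum_set)
  also have "\<dots> = (\<Sum>k<length cs. f (cs!k))" by (simp add: sum_list_sum_nth atLeast0LessThan)
  finally show ?thesis .
qed

definition vec_scatter :: "nat \<Rightarrow> nat list \<Rightarrow> 'a::comm_monoid_add vec \<Rightarrow> 'a vec" where
  "vec_scatter n cs v = vec n (\<lambda>j. \<Sum>k<length cs. if cs!k = j then v$k else 0)"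

lemma dim_vec_scatter[simp]: "dim_vec (vec_scatter n cs v) = n" by (simp add: vec_scatter_def)

lemma vec_scatter_nth:
  assumes "distinct cs" "set cs \<subseteq> {..<n}" "k < length cs"
  shows "vec_scatter n cs v $ (cs!k) = v $ k"
proof -
  have ck: "cs!k < n" using assms by (meson nth_mem subsetD lessThan_iff)
  have "(\<Sum>k'<length cs. if cs!k' = cs!k then v$k' else 0) = (\<Sum>k'<length cs. if k' = k then v$k' else 0)"
    by (rule sum.cong) (use assms in \<open>auto simp: nth_eq_iff_index_eq\<close>)
  then show ?thesis using ck assms(3) by (simp add: vec_scatter_def)
qed

lemma vec_scatter_outside:
  assumes "j < n" "j \<notin> set cs" shows "vec_scatter n cs v $ j = 0"
  using assms by (auto simp: vec_scatter_def intro!: sum.neutral)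

lemma mult_mat_vec_scatter:
  assumes M: "M \<in> carrier_mat d n" and "distinct cs" "set cs \<subseteq> {..<n}" "i < d"
  shows "(M *\<^sub>v vec_scatter n cs v) $ i = (\<Sum>k<length cs. M $$ (i, cs!k) * v $ k)"
proof -
  have "(M *\<^sub>v vec_scatter n cs v) $ i = (\<Sum>j<n. M $$ (i,j) * vec_scatter n cs v $ j)"
    by (rule mult_mat_vec_nth[OF M]) (use assms in auto)
  also have "\<dots> = (\<Sum>k<length cs. M $$ (i, cs!k) * vec_scatter n cs v $ (cs!k))"
    by (rule sum_list_support) (use assms in \<open>auto simp: vec_scatter_outside\<close>)
  also have "\<dots> = (\<Sum>k<length cs. M $$ (i, cs!k) * v $ k)"
    by (rule sum.cong) (use assms in \<open>auto simp: vec_scatter_nth\<close>)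
  finally show ?thesis .
qed

lemma submat_of_int:
  assumes "A \<in> carrier_mat d n" "set X \<subseteq> {..<d}" "set Y \<subseteq> {..<n}"
  shows "submat (map_mat real_of_int A) X Y = map_mat real_of_int (submat A X Y)"
proof (rule eq_matI)
  fix i j assume "i < dim_row (map_mat real_of_int (submat A X Y))" "j < dim_col (map_mat real_of_int (submat A X Y))"
  then have ij: "i < length X" "j < length Y" by auto
  then have "X!i < d" "Y!j < n" using assms by (meson nth_mem subsetD lessThan_iff)+
  then show "submat (map_mat real_of_int A) X Y $$ (i, j) = map_mat real_of_int (submat A X Y) $$ (i, j)"
    using ij assms(1) by (simp add: submat_def)
qed auto

lemma det_submat_of_int:
  assumes "A \<in> carrier_mat d n" "set X \<subseteq> {..<d}" "set Y \<subseteq> {..<n}"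
  shows "det (submat (map_mat real_of_int A) X Y) = real_of_int (det (submat A X Y))"
  unfolding submat_of_int[OF assms] by simp

section \<open>Circuits of totally unimodular matrices\<close>

definition support_minimal :: "int mat \<Rightarrow> real vec \<Rightarrow> bool" where
  "support_minimal A z \<longleftrightarrow> z \<in> real_ker A \<and> z \<noteq> 0\<^sub>v (dim_col A) \<and>
     (\<forall>y \<in> real_ker A. y \<noteq> 0\<^sub>v (dim_col A) \<longrightarrow> \<not> supp y \<subset> supp z)"

lemma circuits_conv:
  "circuits A = {g. \<exists>z. support_minimal A z \<and> on_line g z \<and> g \<noteq> 0\<^sub>v (dim_col A) \<and>
     (\<forall>h. on_line h z \<longrightarrow> h \<noteq> 0\<^sub>v (dim_col A) \<longrightarrow> l1norm g \<le> l1norm h)}"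
  unfolding circuits_def support_minimal_def by (simp add: Bex_def conj_assoc)

lemma support_minimal_parallel:
  assumes A: "A \<in> carrier_mat d n" and z: "support_minimal A z"
    and y: "y \<in> real_ker A" "y \<noteq> 0\<^sub>v n" "supp y \<subseteq> supp z"
  shows "\<exists>t. t \<noteq> 0 \<and> y = t \<cdot>\<^sub>v z"
proof -
  have zk: "z \<in> real_ker A" and dz: "dim_vec z = n" and dy: "dim_vec y = n"
    using z y A by (auto simp: support_minimal_def real_ker_def)
  have eqs: "supp y = supp z" using z y A by (auto simp: support_minimal_def)
  obtain k where k: "k < n" "y $ k \<noteq> 0" using y(2) dy by (metis eq_vecI index_zero_vec(1) index_zero_vec(2))
  have zk0: "z $ k \<noteq> 0" using k eqs dy dz by (auto simp: supp_def)
  define t where "t = y $ k / z $ k"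
  define v where "v = 1 \<cdot>\<^sub>v y + (- t) \<cdot>\<^sub>v z"
  have vk: "v \<in> real_ker A" unfolding v_def by (rule real_ker_lincomb[OF A y(1) zk])
  have vj: "v $ j = y $ j - t * z $ j" if "j < n" for j using that dy dz by (simp add: v_def)
  have "supp v \<subseteq> supp z"
  proof
    fix j assume "j \<in> supp v"
    then have "j < n" "v $ j \<noteq> 0" using dy dz by (auto simp: supp_def v_def)
    then have "j \<in> supp y \<or> j \<in> supp z" using vj dy dz by (auto simp: supp_def)
    then show "j \<in> supp z" using eqs by blast
  qed
  moreover have "k \<notin> supp v" using vj[OF k(1)] zk0 by (simp add: supp_def t_def)
  moreover have "k \<in> supp z" using k zk0 dz by (simp add: supp_def)
  ultimately have "supp v \<subset> supp z" by blast
  then have "v = 0\<^sub>v n" using z vk A by (auto simp: support_minimal_def)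
  then have "y $ j = (t \<cdot>\<^sub>v z) $ j" if "j < n" for j using vj[OF that] that dz by simp
  then have "y = t \<cdot>\<^sub>v z" using dy dz by (intro eq_vecI) auto
  moreover have "t \<noteq> 0" using k zk0 by (simp add: t_def)
  ultimately show ?thesis by blast
qed

lemma independent_columns_proper_support:
  assumes A: "A \<in> carrier_mat d n" and z: "support_minimal A z"
    and cs: "distinct cs" "set cs \<subset> supp z"
  shows "independent_columns (map_mat real_of_int A) cs"
  unfolding independent_columns_def
proof (intro ballI impI, rule ccontr)
  let ?B = "map_mat real_of_int A" and ?m = "length cs"
  fix v :: "real vec"
  assume v: "v \<in> carrier_vec ?m" and e: "submat ?B [0..<dim_row ?B] cs *\<^sub>v v = 0\<^sub>v (dim_row ?B)"
    and nz: "v \<noteq> 0\<^sub>v ?m"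
  have B: "?B \<in> carrier_mat d n" and dr: "dim_row ?B = d" using A by auto
  have dz: "dim_vec z = n" using z A by (simp add: support_minimal_def real_ker_def)
  have scn: "set cs \<subseteq> {..<n}" using cs(2) dz by (auto simp: supp_def)
  define y where "y = vec_scatter n cs v"
  have "?B *\<^sub>v y = 0\<^sub>v d"
  proof (rule eq_vecI)
    fix i assume "i < dim_vec (0\<^sub>v d :: real vec)"
    then have i: "i < d" by simp
    have "(?B *\<^sub>v y) $ i = (\<Sum>k<?m. ?B $$ (i, cs ! k) * v $ k)"
      unfolding y_def by (rule mult_mat_vec_scatter[OF B cs(1) scn i])
    also have "\<dots> = (submat ?B [0..<d] cs *\<^sub>v v) $ i" using mult_submat_upt[OF i v] by simp
    finally show "(?B *\<^sub>v y) $ i = 0\<^sub>v d $ i" using e[unfolded dr] i by simp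
  qed (use A in simp)
  then have yk: "y \<in> real_ker A" using A by (simp add: real_ker_def y_def)
  obtain k where k: "k < ?m" "v $ k \<noteq> 0"
    using nz v by (metis eq_vecI carrier_vecD index_zero_vec(1) index_zero_vec(2))
  have "y $ (cs ! k) \<noteq> 0" using vec_scatter_nth[OF cs(1) scn k(1), of v] k(2) by (simp add: y_def)
  moreover have "cs ! k < n" using scn k(1) by (meson nth_mem subsetD lessThan_iff)
  ultimately have ynz: "y \<noteq> 0\<^sub>v n" by auto
  have "supp y \<subseteq> set cs" using vec_scatter_outside[of _ n cs v] by (auto simp: supp_def y_def)
  then have "supp y \<subset> supp z" using cs(2) by blast
  then show False using z yk ynz A by (auto simp: support_minimal_def)
qed

lemma det_submat_support_zero:
  assumes A: "A \<in> carrier_mat d n" and z: "z \<in> real_ker A"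
    and cs: "distinct cs" "set cs = supp z" "cs \<noteq> []"
    and rs: "set rs \<subseteq> {..<d}" "length rs = length cs"
  shows "det (submat A rs cs) = 0"
proof -
  let ?B = "map_mat real_of_int A"
  have B: "?B \<in> carrier_mat d n" using A by simp
  have dz: "dim_vec z = n" and Bz: "?B *\<^sub>v z = 0\<^sub>v d" using z A by (auto simp: real_ker_def)
  have scn: "set cs \<subseteq> {..<n}" using cs(2) dz by (auto simp: supp_def)
  define zc where "zc = vec (length cs) (\<lambda>k. z $ (cs ! k))"
  have sq: "submat ?B rs cs \<in> carrier_mat (length cs) (length cs)"
    using submat_carrier[of ?B rs cs] rs(2) by simp
  have zc1: "zc \<in> carrier_vec (length cs)" by (simp add: zc_def)
  have "cs ! 0 \<in> supp z" using cs(2,3) by (metis length_greater_0_conv nth_mem)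
  then have "zc $ 0 \<noteq> 0" using cs(3) by (simp add: zc_def supp_def)
  then have zc2: "zc \<noteq> 0\<^sub>v (length cs)" using cs(3) by auto
  have "submat ?B rs cs *\<^sub>v zc = 0\<^sub>v (length cs)"
  proof (rule eq_vecI)
    fix r assume "r < dim_vec (0\<^sub>v (length cs) :: real vec)"
    then have r: "r < length cs" by simp
    have row: "rs ! r < d" using rs r by (metis nth_mem subsetD lessThan_iff)
    have "(submat ?B rs cs *\<^sub>v zc) $ r = (\<Sum>k<length cs. ?B $$ (rs ! r, cs ! k) * z $ (cs ! k))"
      using mult_submat_nth[of r rs zc cs ?B] r rs(2) zc1 by (simp add: zc_def)
    also have "\<dots> = (\<Sum>j<n. ?B $$ (rs ! r, j) * z $ j)"
      by (rule sum_list_support[OF cs(1) scn, symmetric]) (use cs(2) dz in \<open>auto simp: supp_def\<close>)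
    also have "\<dots> = (?B *\<^sub>v z) $ (rs ! r)" using mult_mat_vec_nth[OF B dz row] by simp
    finally show "(submat ?B rs cs *\<^sub>v zc) $ r = 0\<^sub>v (length cs) $ r" using Bz row r by simp
  qed (use rs(2) in simp)
  then have "det (submat ?B rs cs) = 0" using det_0_iff_vec_prod_zero_field[OF sq] zc1 zc2 by blast
  then show ?thesis using det_submat_of_int[OF A rs(1) scn] by simp
qed

lemma cofactor_scatter_in_int_ker:
  assumes A: "A \<in> carrier_mat d n" and cs: "distinct cs" "set cs \<subseteq> {..<n}"
    and len: "length cs = Suc (length rs)"
    and zero: "\<And>i. i < d \<Longrightarrow> det (submat A (rs @ [i]) cs) = 0"
  shows "vec_scatter n cs (cofactor_vec A rs cs) \<in> int_ker A"
proof -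
  have "A *\<^sub>v vec_scatter n cs (cofactor_vec A rs cs) = 0\<^sub>v d"
  proof (rule eq_vecI)
    fix i assume "i < dim_vec (0\<^sub>v d :: int vec)"
    then have i: "i < d" by simp
    have "(A *\<^sub>v vec_scatter n cs (cofactor_vec A rs cs)) $ i
        = (\<Sum>k<length cs. A $$ (i, cs ! k) * cofactor_vec A rs cs $ k)"
      by (rule mult_mat_vec_scatter[OF A cs i])
    also have "\<dots> = det (submat A (rs @ [i]) cs)" using det_submat_snoc[OF len, of A i] by simp
    finally show "(A *\<^sub>v vec_scatter n cs (cofactor_vec A rs cs)) $ i = 0\<^sub>v d $ i" using zero[OF i] i by simp
  qed (use A in simp)
  then show ?thesis using A by (simp add: int_ker_def)
qed

lemma cofactor_scatter_unit_entries:
  assumes A: "A \<in> carrier_mat d n" and tu: "totally_unimodular A"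
    and rs: "distinct rs" "set rs \<subseteq> {..<d}" and cs: "distinct cs" "set cs \<subseteq> {..<n}"
    and len: "length cs = Suc (length rs)" and j: "j < n"
  shows "vec_scatter n cs (cofactor_vec A rs cs) $ j \<in> {-1, 0, 1}"
proof (cases "j \<in> set cs")
  case True
  then obtain k where k: "k < length cs" "j = cs ! k" by (metis in_set_conv_nth)
  have "det (submat A rs (remove_nth k cs)) \<in> {-1, 0, 1}"
    by (rule det_submat_unimodular[OF A tu rs(1) distinct_remove_nth[OF cs(1)] rs(2)])
      (use set_remove_nth[of k cs] cs(2) k len in auto)
  then have "(-1) ^ (length rs + k) * det (submat A rs (remove_nth k cs)) \<in> {-1, 0, 1}"
    by (cases "even (length rs + k)") auto
  moreover have "vec_scatter n cs (cofactor_vec A rs cs) $ j = cofactor_vec A rs cs $ k"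
    using vec_scatter_nth[OF cs k(1)] k(2) by simp
  ultimately show ?thesis using k(1) by (simp add: cofactor_vec_def)
next
  case False
  then show ?thesis using vec_scatter_outside[OF j False, of "cofactor_vec A rs cs"] by simp
qed

text \<open>Cramer's rule: the cofactors of a nonsingular maximal minor on the support of a
  support-minimal kernel vector form an integer kernel vector on the same line, and total
  unimodularity makes its entries units.\<close>
lemma support_minimal_unit_multiple:
  assumes A: "A \<in> carrier_mat d n" and tu: "totally_unimodular A" and z: "support_minimal A z"
  obtains h t where "h \<in> int_ker A" "\<forall>j<n. h $ j \<in> {-1, 0, 1}" "h \<noteq> 0\<^sub>v n" "t \<noteq> 0"
    "map_vec real_of_int h = t \<cdot>\<^sub>v z"
proof -
  let ?B = "map_mat real_of_int A"
  have zk: "z \<in> real_ker A" and znz: "z \<noteq> 0\<^sub>v n" using z A by (auto simp: support_minimal_def)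
  have dz: "dim_vec z = n" using zk A by (simp add: real_ker_def)
  define cs where "cs = sorted_list_of_set (supp z)"
  have dcs: "distinct cs" and scs: "set cs = supp z" by (simp_all add: cs_def supp_def)
  have scn: "set cs \<subseteq> {..<n}" using scs dz by (auto simp: supp_def)
  obtain k0 where "k0 < n" "z $ k0 \<noteq> 0" using znz dz by (metis eq_vecI index_zero_vec(1) index_zero_vec(2))
  then have "k0 \<in> supp z" using dz by (simp add: supp_def)
  then have "cs \<noteq> []" using scs by auto
  then obtain cs' c where csd: "cs = cs' @ [c]" by (metis rev_exhaust)
  have dcs': "distinct cs'" and scs': "set cs' \<subseteq> {..<n}" using dcs scn csd by auto
  have "set cs' \<subset> supp z" using csd scs dcs by auto
  then obtain rs where rs: "distinct rs" "set rs \<subseteq> {..<d}" "length rs = length cs'" "det (submat ?B rs cs') \<noteq> 0"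
    using exists_nonsingular_submat[OF independent_columns_proper_support[OF A z dcs']] A by auto
  have len: "length cs = Suc (length rs)" using csd rs(3) by simp
  define h0 where "h0 = vec_scatter n cs (cofactor_vec A rs cs)"
  have h0k: "h0 \<in> int_ker A" unfolding h0_def
    by (rule cofactor_scatter_in_int_ker[OF A dcs scn len])
      (use det_submat_support_zero[OF A zk dcs scs \<open>cs \<noteq> []\<close>] rs(2) len in auto)
  have dh0: "dim_vec h0 = n" by (simp add: h0_def)
  have h0_unit: "\<forall>j<n. h0 $ j \<in> {-1, 0, 1}"
    using cofactor_scatter_unit_entries[OF A tu rs(1,2) dcs scn len] by (simp add: h0_def)
  have "h0 $ (cs ! length cs') = det (submat A rs cs')"
    using vec_scatter_nth[OF dcs scn, of "length cs'" "cofactor_vec A rs cs"] cofactor_vec_last[OF len, of A] csd rs(3)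
    by (simp add: h0_def)
  moreover have "det (submat A rs cs') \<noteq> 0" using rs(4) det_submat_of_int[OF A rs(2) scs'] by simp
  moreover have "cs ! length cs' < n" using scn csd by simp
  ultimately have h0nz: "h0 \<noteq> 0\<^sub>v n" by auto
  have "map_vec real_of_int h0 \<noteq> 0\<^sub>v n" using h0nz of_int_hom.vec_hom_zero_iff by metis
  moreover have "supp (map_vec real_of_int h0) \<subseteq> supp z"
  proof
    fix j assume "j \<in> supp (map_vec real_of_int h0)"
    then have "j < n" "h0 $ j \<noteq> 0" using dh0 by (auto simp: supp_def)
    then have "j \<in> set cs" using vec_scatter_outside[of j n cs "cofactor_vec A rs cs"] by (auto simp: h0_def)
    then show "j \<in> supp z" using scs by simp
  qed
  ultimately show ?thesis
    using that[OF h0k h0_unit h0nz] support_minimal_parallel[OF A z int_ker_imp_real_ker[OF A h0k]] by blast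
qed

lemma support_minimal_unit_pos_multiple:
  assumes A: "A \<in> carrier_mat d n" and tu: "totally_unimodular A" and z: "support_minimal A z"
  obtains h t where "h \<in> int_ker A" "\<forall>j<n. h $ j \<in> {-1, 0, 1}" "h \<noteq> 0\<^sub>v n" "t > 0"
    "map_vec real_of_int h = t \<cdot>\<^sub>v z"
proof -
  obtain h t where h: "h \<in> int_ker A" "\<forall>j<n. h $ j \<in> {-1, 0, 1}" "h \<noteq> 0\<^sub>v n" "t \<noteq> 0"
    "map_vec real_of_int h = t \<cdot>\<^sub>v z"
    using support_minimal_unit_multiple[OF A tu z] by metis
  show ?thesis
  proof (cases "t > 0")
    case True
    then show ?thesis using that h by blast
  next
    case False
    have dh: "dim_vec h = n" using h(1) A by (simp add: int_ker_def)
    have "map_vec real_of_int ((-1) \<cdot>\<^sub>v h) = (- t) \<cdot>\<^sub>v z"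
      using h(5) by (simp add: of_int_hom.vec_hom_smult smult_smult_assoc)
    moreover have "(-1) \<cdot>\<^sub>v h \<in> int_ker A" by (rule int_ker_smult[OF A h(1)])
    moreover have "\<forall>j<n. ((-1) \<cdot>\<^sub>v h) $ j \<in> {-1, 0, 1}" using h(2) dh by auto
    moreover have "(-1) \<cdot>\<^sub>v h \<noteq> 0\<^sub>v n"
    proof
      assume h0: "(-1) \<cdot>\<^sub>v h = 0\<^sub>v n"
      have "h $ j = 0" if "j < n" for j
        using arg_cong[where f = "\<lambda>v. v $ j", OF h0] that dh by simp
      then show False using h(3) dh by (metis eq_vecI index_zero_vec(1) index_zero_vec(2))
    qed
    moreover have "- t > 0" using False h(4) by simp
    ultimately show ?thesis using that by blast
  qed
qed

lemma conformal_reduction: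
  fixes w y :: "real vec"
  assumes j1: "j1 < n" "y $ j1 * w $ j1 > 0"
  obtains lam j0 where "lam > 0" "\<And>j. j < n \<Longrightarrow> (w $ j - lam * y $ j) * w $ j \<ge> 0"
    "j0 < n" "w $ j0 \<noteq> 0" "w $ j0 = lam * y $ j0"
proof -
  define P where "P = {j. j < n \<and> y $ j * w $ j > 0}"
  have P: "finite P" "j1 \<in> P" using j1 by (auto simp: P_def)
  define lam where "lam = Min ((\<lambda>j. w $ j / y $ j) ` P)"
  have "lam \<in> (\<lambda>j. w $ j / y $ j) ` P" unfolding lam_def by (rule Min_in) (use P in auto)
  then obtain j0 where j0: "j0 \<in> P" "lam = w $ j0 / y $ j0" by blast
  have lam_le: "lam \<le> w $ j / y $ j" if "j \<in> P" for j using P that by (auto simp: lam_def)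
  have j0': "j0 < n" "y $ j0 * w $ j0 > 0" using j0(1) by (auto simp: P_def)
  then have lam_pos: "lam > 0" using j0(2) by (auto simp: zero_less_mult_iff zero_less_divide_iff)
  have "(w $ j - lam * y $ j) * w $ j \<ge> 0" if j: "j < n" for j
  proof -
    have split: "(w $ j - lam * y $ j) * w $ j = w $ j * w $ j - lam * (y $ j * w $ j)"
      by (simp add: algebra_simps)
    show ?thesis
    proof (cases "y $ j * w $ j > 0")
      case True
      then have "lam * (y $ j * w $ j) \<le> (w $ j / y $ j) * (y $ j * w $ j)"
        using lam_le[of j] j by (intro mult_right_mono) (auto simp: P_def)
      also have "\<dots> = w $ j * w $ j" using True by (auto simp: field_simps)
      finally show ?thesis using split by simp
    next
      case False
      then have "lam * (y $ j * w $ j) \<le> 0" using lam_pos by (simp add: mult_nonneg_nonpos)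
      then show ?thesis using split zero_le_square[of "w $ j"] by linarith
    qed
  qed
  moreover have "w $ j0 \<noteq> 0" "w $ j0 = lam * y $ j0" using j0' j0(2) by auto
  ultimately show ?thesis using that lam_pos j0' by blast
qed

text \<open>Subtracting the largest conformal multiple of a kernel vector with smaller support
  shrinks the support.\<close>
lemma exists_conformal_smaller_support:
  assumes A: "A \<in> carrier_mat d n" and w: "w \<in> real_ker A" "w \<noteq> 0\<^sub>v n" "\<not> support_minimal A w"
  obtains w' where "w' \<in> real_ker A" "w' \<noteq> 0\<^sub>v n" "supp w' \<subset> supp w" "\<forall>j<n. w' $ j * w $ j \<ge> 0"
proof -
  have dw: "dim_vec w = n" using w A by (simp add: real_ker_def)
  obtain y where y: "y \<in> real_ker A" "y \<noteq> 0\<^sub>v n" "supp y \<subset> supp w"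
    using w A by (auto simp: support_minimal_def)
  have dy: "dim_vec y = n" using y A by (simp add: real_ker_def)
  obtain j1 where j1: "j1 < n" "y $ j1 \<noteq> 0" using y(2) dy by (metis eq_vecI index_zero_vec(1) index_zero_vec(2))
  have "w $ j1 \<noteq> 0" using y(3) j1 dy by (auto simp: supp_def)
  define s :: real where "s = (if y $ j1 * w $ j1 > 0 then 1 else -1)"
  have "(s * y $ j1) * w $ j1 > 0" using j1 \<open>w $ j1 \<noteq> 0\<close>
    by (auto simp: s_def mult_less_0_iff zero_less_mult_iff)
  then obtain lam j0 where "lam > 0" and lam: "\<And>j. j < n \<Longrightarrow> (w $ j - lam * (s * y $ j)) * w $ j \<ge> 0"
    and j0: "j0 < n" "w $ j0 \<noteq> 0" "w $ j0 = lam * (s * y $ j0)"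
    using conformal_reduction[of j1 n "vec n (\<lambda>j. s * y $ j)" w] j1(1) by auto
  define w' where "w' = 1 \<cdot>\<^sub>v w + (- lam * s) \<cdot>\<^sub>v y"
  have w'j: "w' $ j = w $ j - lam * (s * y $ j)" if "j < n" for j
    using that dw dy by (simp add: w'_def)
  have "supp w' \<subseteq> supp w" using y(3) w'j dw dy by (auto simp: supp_def w'_def)
  moreover have "j0 \<notin> supp w'" "j0 \<in> supp w" using w'j[OF j0(1)] j0 dw by (auto simp: supp_def)
  ultimately have "supp w' \<subset> supp w" by blast
  moreover have "w' \<noteq> 0\<^sub>v n"
  proof
    assume "w' = 0\<^sub>v n"
    then have "supp w \<subseteq> supp y" using w'j dw dy by (auto simp: supp_def)
    then show False using y(3) by blast
  qed
  moreover have "w' \<in> real_ker A" unfolding w'_def by (rule real_ker_lincomb[OF A w(1) y(1)])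
  ultimately show ?thesis using that lam w'j by simp
qed

lemma exists_conformal_support_minimal:
  assumes A: "A \<in> carrier_mat d n"
  shows "w \<in> real_ker A \<Longrightarrow> w \<noteq> 0\<^sub>v n \<Longrightarrow>
    \<exists>z. support_minimal A z \<and> supp z \<subseteq> supp w \<and> (\<forall>j<n. z $ j * w $ j \<ge> 0)"
proof (induction "card (supp w)" arbitrary: w rule: less_induct)
  case less
  show ?case
  proof (cases "support_minimal A w")
    case True
    then show ?thesis by (intro exI[of _ w]) simp
  next
    case False
    obtain w' where w': "w' \<in> real_ker A" "w' \<noteq> 0\<^sub>v n" "supp w' \<subset> supp w" "\<forall>j<n. w' $ j * w $ j \<ge> 0"
      using exists_conformal_smaller_support[OF A less.prems False] by blast
    have "card (supp w') < card (supp w)" using w'(3) by (intro psubset_card_mono) (simp_all add: supp_def)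
    then obtain z where z: "support_minimal A z" "supp z \<subseteq> supp w'" "\<forall>j<n. z $ j * w' $ j \<ge> 0"
      using less.hyps w'(1,2) by blast
    have dz: "dim_vec z = n" using z(1) A by (simp add: support_minimal_def real_ker_def)
    have "z $ j * w $ j \<ge> 0" if j: "j < n" for j
    proof (cases "z $ j = 0")
      case False
      then have "w' $ j \<noteq> 0" using z(2) j dz by (auto simp: supp_def)
      moreover have "z $ j * w' $ j \<ge> 0" "w' $ j * w $ j \<ge> 0" using z(3) w'(4) j by auto
      ultimately show ?thesis by (auto simp: zero_le_mult_iff)
    qed simp
    then show ?thesis using z w'(3) by blast
  qed
qed

lemma int_multiple_of_unit_on_line:
  assumes g: "dim_vec g = n" "g \<noteq> 0\<^sub>v n" "\<forall>j<n. g $ j \<in> {-1, 0, 1::int}"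
    and gt: "\<forall>j<n. real_of_int (g $ j) = t * z $ j"
    and hs: "\<forall>j<n. real_of_int (h $ j) = s * z $ j"
  shows "\<exists>k::int. \<forall>j<n. h $ j = k * g $ j"
proof -
  obtain j0 where j0: "j0 < n" "g $ j0 \<noteq> 0" using g(1,2) by (metis eq_vecI index_zero_vec(1) index_zero_vec(2))
  have g2: "g $ j0 * g $ j0 = 1" using g(3) j0 by auto
  have t0: "t \<noteq> 0" using gt j0 by auto
  define k where "k = h $ j0 * g $ j0"
  have "real_of_int k = s * z $ j0 * (t * z $ j0)" using hs gt j0 by (simp add: k_def)
  also have "\<dots> = s / t * ((t * z $ j0) * (t * z $ j0))" using t0 by (simp add: field_simps)
  also have "(t * z $ j0) * (t * z $ j0) = 1" using gt j0 g2 by (metis of_int_1 of_int_mult)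
  finally have k: "real_of_int k = s / t" by simp
  have "h $ j = k * g $ j" if j: "j < n" for j
  proof -
    have "real_of_int (h $ j) = s / t * (t * z $ j)" using hs j t0 by simp
    also have "\<dots> = real_of_int (k * g $ j)" using gt j k by simp
    finally show ?thesis by linarith
  qed
  then show ?thesis by blast
qed

lemma unit_vector_l1norm_minimal_on_line:
  assumes g: "dim_vec g = n" "g \<noteq> 0\<^sub>v n" "\<forall>j<n. g $ j \<in> {-1, 0, 1}"
    and gt: "\<forall>j<n. real_of_int (g $ j) = t * z $ j" and dz: "dim_vec z = n"
    and h: "on_line h z" "h \<noteq> 0\<^sub>v n"
  shows "l1norm g \<le> l1norm h"
proof -
  have dh: "dim_vec h = n" using h(1) dz by (simp add: on_line_def)
  obtain s where "\<forall>j<n. real_of_int (h $ j) = s * z $ j" using h(1) dz by (auto simp: on_line_def)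
  then obtain k where k: "\<forall>j<n. h $ j = k * g $ j" using int_multiple_of_unit_on_line[OF g gt] by blast
  have "k \<noteq> 0" using k h(2) dh by (metis eq_vecI index_zero_vec(1) index_zero_vec(2) mult_zero_left)
  then have "1 * l1norm g \<le> \<bar>k\<bar> * l1norm g" using l1norm_nonneg[of g] by (intro mult_right_mono) auto
  then show ?thesis using l1norm_smult[OF dh g(1) k] by simp
qed

lemma circuits_unit_entries:
  assumes A: "A \<in> carrier_mat d n" and tu: "totally_unimodular A" and g: "g \<in> circuits A"
  shows "dim_vec g = n" "\<forall>j<n. g $ j \<in> {-1, 0, 1}"
proof -
  obtain z where z: "support_minimal A z" "on_line g z" "g \<noteq> 0\<^sub>v n"
      "\<forall>h. on_line h z \<longrightarrow> h \<noteq> 0\<^sub>v n \<longrightarrow> l1norm g \<le> l1norm h"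
    using g A unfolding circuits_conv by auto
  have dz: "dim_vec z = n" using z(1) A by (simp add: support_minimal_def real_ker_def)
  obtain h t where h: "h \<in> int_ker A" "\<forall>j<n. h $ j \<in> {-1, 0, 1}" "h \<noteq> 0\<^sub>v n"
      "map_vec real_of_int h = t \<cdot>\<^sub>v z"
    using support_minimal_unit_multiple[OF A tu z(1)] by metis
  have dh: "dim_vec h = n" using h(1) A by (simp add: int_ker_def)
  have ht: "\<forall>j<n. real_of_int (h $ j) = t * z $ j" using h(4) dh dz by (metis index_map_vec(1) index_smult_vec(1))
  show dg: "dim_vec g = n" using z(2) dz by (simp add: on_line_def)
  obtain s where "\<forall>j<n. real_of_int (g $ j) = s * z $ j" using z(2) dz by (auto simp: on_line_def)
  then obtain k where k: "\<forall>j<n. g $ j = k * h $ j" using int_multiple_of_unit_on_line[OF dh h(3,2) ht] by blast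
  have "on_line h z" using ht dh dz by (auto simp: on_line_def)
  then have "\<bar>k\<bar> * l1norm h \<le> 1 * l1norm h" using z(4) h(3) l1norm_smult[OF dg dh k] by simp
  then have "\<bar>k\<bar> \<le> 1" using l1norm_pos[OF dh h(3)] by (simp add: mult_le_cancel_right)
  then show "\<forall>j<n. g $ j \<in> {-1, 0, 1}" using k h(2) by (auto simp: abs_le_iff)
qed

lemma finite_vecs_with_entries_in:
  assumes "finite S"
  shows "finite {v :: 'a vec. dim_vec v = n \<and> (\<forall>j<n. v $ j \<in> S)}"
proof -
  have "{v :: 'a vec. dim_vec v = n \<and> (\<forall>j<n. v $ j \<in> S)} \<subseteq> vec_of_list ` {xs. set xs \<subseteq> S \<and> length xs = n}"
  proof
    fix v :: "'a vec" assume v: "v \<in> {v. dim_vec v = n \<and> (\<forall>j<n. v $ j \<in> S)}"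
    have "set (list_of_vec v) \<subseteq> S" using v by (auto simp: in_set_conv_nth)
    moreover have "length (list_of_vec v) = n" using v by simp
    ultimately show "v \<in> vec_of_list ` {xs. set xs \<subseteq> S \<and> length xs = n}"
      by (metis (mono_tags) image_eqI mem_Collect_eq vec_list)
  qed
  moreover have "finite {xs. set xs \<subseteq> S \<and> length xs = n}" by (rule finite_lists_length_eq[OF assms])
  ultimately show ?thesis by (meson finite_imageI finite_subset)
qed

lemma finite_circuits:
  assumes "A \<in> carrier_mat d n" "totally_unimodular A"
  shows "finite (circuits A)"
  by (rule finite_subset[OF _ finite_vecs_with_entries_in[of "{-1, 0, 1::int}" n]])
    (use circuits_unit_entries[OF assms] in auto)

lemma graver_in_circuits:
  assumes A: "A \<in> carrier_mat d n" and tu: "totally_unimodular A" and g: "g \<in> graver A"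
  shows "g \<in> circuits A"
proof -
  let ?gr = "map_vec real_of_int g"
  have gk: "g \<in> int_ker A" and dg: "dim_vec g = n" and gnz: "g \<noteq> 0\<^sub>v n"
    using graver_nonzero[OF A g] by auto
  have gmin: "\<forall>y \<in> int_ker A - {0\<^sub>v n}. y \<sqsubseteq> g \<longrightarrow> y = g" using g A by (auto simp: graver_def)
  have "?gr \<noteq> 0\<^sub>v n" using gnz of_int_hom.vec_hom_zero_iff by metis
  then obtain z where z: "support_minimal A z" "supp z \<subseteq> supp ?gr" "\<forall>j<n. z $ j * ?gr $ j \<ge> 0"
    using exists_conformal_support_minimal[OF A int_ker_imp_real_ker[OF A gk]] by blast
  have dz: "dim_vec z = n" using z(1) A by (simp add: support_minimal_def real_ker_def)
  obtain h t where h: "h \<in> int_ker A" "\<forall>j<n. h $ j \<in> {-1, 0, 1}" "h \<noteq> 0\<^sub>v n" "t > 0"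
      "map_vec real_of_int h = t \<cdot>\<^sub>v z"
    using support_minimal_unit_pos_multiple[OF A tu z(1)] by metis
  have dh: "dim_vec h = n" using h(1) A by (simp add: int_ker_def)
  have ht: "\<forall>j<n. real_of_int (h $ j) = t * z $ j" using h(5) dh dz by (metis index_map_vec(1) index_smult_vec(1))
  have "h \<sqsubseteq> g"
    unfolding conformal_le_def
  proof (intro conjI allI impI)
    show "dim_vec h = dim_vec g" using dh dg by simp
    fix i assume "i < dim_vec g"
    then have i: "i < n" using dg by simp
    have "real_of_int (h $ i * g $ i) = t * (z $ i * ?gr $ i)" using ht i dg by simp
    also have "\<dots> \<ge> 0" using h(4) z(3) i by simp
    finally show "h $ i * g $ i \<ge> 0" by (metis of_int_0_le_iff)
    show "\<bar>h $ i\<bar> \<le> \<bar>g $ i\<bar>"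
    proof (cases "h $ i = 0")
      case False
      then have "i \<in> supp z" using ht h(4) i dz by (auto simp: supp_def)
      then have "g $ i \<noteq> 0" using z(2) i dg by (auto simp: supp_def)
      then show ?thesis using h(2) i by auto
    qed simp
  qed
  then have "h = g" using gmin h(1,3) by blast
  then have "on_line g z" "\<forall>h'. on_line h' z \<longrightarrow> h' \<noteq> 0\<^sub>v n \<longrightarrow> l1norm g \<le> l1norm h'"
    using ht dh dz unit_vector_l1norm_minimal_on_line[OF dg gnz _ _ dz] h(2) by (auto simp: on_line_def)
  then show ?thesis unfolding circuits_conv using z(1) gnz A by auto
qed

section \<open>Steepest-descent runs\<close>

definition sd_step_by :: "int mat \<Rightarrow> int vec \<Rightarrow> int vec \<Rightarrow> int vec \<Rightarrow> int vec \<Rightarrow> int vec \<Rightarrow> int \<Rightarrow> int vec \<Rightarrow> bool" where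
  "sd_step_by A b c u x z \<alpha> x' \<longleftrightarrow> z \<in> graver A \<and> feasible A b u (x + z) \<and>
     (\<forall>g \<in> graver A. feasible A b u (x + g) \<longrightarrow> sd_ratio c g \<le> sd_ratio c z) \<and> sd_ratio c z > 0 \<and>
     feasible A b u (x + \<alpha> \<cdot>\<^sub>v z) \<and> (\<forall>\<beta>. feasible A b u (x + \<beta> \<cdot>\<^sub>v z) \<longrightarrow> \<beta> \<le> \<alpha>) \<and>
     x' = x + \<alpha> \<cdot>\<^sub>v z"

lemma sd_step_imp_sd_step_by: "sd_step A b c u x x' \<Longrightarrow> \<exists>z \<alpha>. sd_step_by A b c u x z \<alpha> x'"
  unfolding sd_step_def sd_step_by_def of_int_eq_id id_apply by blast

locale sd_run =
  fixes A :: "int mat" and b c u :: "int vec" and d n :: nat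
    and xs :: "nat \<Rightarrow> int vec" and K :: nat and G :: "nat \<Rightarrow> int vec" and \<alpha> :: "nat \<Rightarrow> int"
  assumes A: "A \<in> carrier_mat d n" and tu: "totally_unimodular A" and dim_c: "dim_vec c = n"
    and feasible_start: "feasible A b u (xs 0)"
    and steps: "\<And>k. k < K \<Longrightarrow> sd_step_by A b c u (xs k) (G k) (\<alpha> k) (xs (Suc k))"
begin

abbreviation ratio :: "nat \<Rightarrow> real" where
  "ratio k \<equiv> sd_ratio c (G k)"

lemma step:
  assumes "k < K"
  shows "G k \<in> graver A" "feasible A b u (xs k + G k)"
    "\<And>g. g \<in> graver A \<Longrightarrow> feasible A b u (xs k + g) \<Longrightarrow> sd_ratio c g \<le> ratio k" "ratio k > 0"
    "\<And>\<beta>. feasible A b u (xs k + \<beta> \<cdot>\<^sub>v G k) \<Longrightarrow> \<beta> \<le> \<alpha> k" "xs (Suc k) = xs k + \<alpha> k \<cdot>\<^sub>v G k"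
  using steps[OF assms] by (auto simp: sd_step_by_def)

lemma feasible_xs: "k \<le> K \<Longrightarrow> feasible A b u (xs k)"
proof (induction k)
  case 0
  then show ?case using feasible_start by simp
next
  case (Suc k)
  then show ?case using steps[of k] by (simp add: sd_step_by_def)
qed

lemma dim_xs: "k \<le> K \<Longrightarrow> dim_vec (xs k) = n"
  using feasible_xs A by (simp add: feasible_def)

lemma direction:
  assumes "k < K"
  shows "dim_vec (G k) = n" "l1norm (G k) > 0" "G k \<in> circuits A" "\<forall>j<n. G k $ j \<in> {-1, 0, 1}"
  using graver_nonzero[OF A step(1)[OF assms]] graver_in_circuits[OF A tu step(1)[OF assms]]
    circuits_unit_entries[OF A tu] by auto

lemma xs_Suc_nth:
  assumes "k < K" "i < n"
  shows "xs (Suc k) $ i = xs k $ i + \<alpha> k * G k $ i"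
  using step(6)[OF assms(1)] assms direction(1)[OF assms(1)] dim_xs[of k] by simp

lemma step_length_pos: "k < K \<Longrightarrow> \<alpha> k \<ge> 1"
  using step(2,5)[of k] by (metis one_smult_vec)

lemma objective_bound:
  assumes "k < K" "w \<in> int_ker A" "feasible A b u (xs k + w)"
  shows "- real_of_int (c \<bullet> w) \<le> ratio k * real_of_int (l1norm w)"
  using graver_ratio_bound[OF A dim_c feasible_xs _ assms(2,3)] step(3)[OF assms(1)] assms(1) by simp

lemma objective_dir: "k < K \<Longrightarrow> - real_of_int (c \<bullet> G k) = ratio k * real_of_int (l1norm (G k))"
  using direction(2)[of k] by (simp add: sd_ratio_def)

text \<open>The next feasible trial point of step k + 1, minus x_k, is a feasible direction at x_k.\<close>
lemma ratio_Suc_le: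
  assumes "Suc k < K"
  shows "ratio (Suc k) \<le> ratio k"
proof -
  have k: "k < K" using assms by simp
  let ?l1 = "\<lambda>v. real_of_int (l1norm v)"
  define w where "w = xs (Suc k) + G (Suc k) - xs k"
  have fw: "feasible A b u (xs (Suc k) + G (Suc k))" using step(2)[OF assms] .
  have dims: "dim_vec (xs k) = n" "dim_vec (xs (Suc k)) = n" "dim_vec (G k) = n" "dim_vec (G (Suc k)) = n"
    using dim_xs direction(1) k assms by auto
  have wk: "w \<in> int_ker A"
    unfolding w_def by (rule feasible_diff_in_int_ker[OF A feasible_xs fw]) (use k in simp)
  have "xs k + w = xs (Suc k) + G (Suc k)" using dims by (intro eq_vecI) (auto simp: w_def)
  then have fxw: "feasible A b u (xs k + w)" using fw by simp
  have dw: "dim_vec w = n" using dims by (simp add: w_def)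
  have we: "\<forall>i<n. w $ i = G (Suc k) $ i + \<alpha> k * G k $ i"
    using xs_Suc_nth[OF k] dims by (simp add: w_def)
  have "c \<bullet> w = c \<bullet> G (Suc k) + \<alpha> k * (c \<bullet> G k)" by (rule scalar_prod_lincomb[OF dw dims(4,3) we])
  then have "- real_of_int (c \<bullet> w) = - real_of_int (c \<bullet> G (Suc k)) + \<alpha> k * (- real_of_int (c \<bullet> G k))"
    by (simp add: algebra_simps)
  then have obj: "- real_of_int (c \<bullet> w) = ratio (Suc k) * ?l1 (G (Suc k)) + \<alpha> k * (ratio k * ?l1 (G k))"
    by (simp only: objective_dir[OF assms] objective_dir[OF k])
  have "l1norm w \<le> l1norm (G (Suc k)) + \<alpha> k * l1norm (G k)"
    by (rule l1norm_lincomb_le[OF dw dims(4,3) we]) (use step_length_pos[OF k] in simp)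
  then have "?l1 w \<le> ?l1 (G (Suc k)) + \<alpha> k * ?l1 (G k)" by (metis of_int_add of_int_le_iff of_int_mult)
  then have "ratio k * ?l1 w \<le> ratio k * (?l1 (G (Suc k)) + \<alpha> k * ?l1 (G k))"
    using step(4)[OF k] by (intro mult_left_mono) auto
  then have "ratio k * ?l1 w \<le> ratio k * ?l1 (G (Suc k)) + \<alpha> k * (ratio k * ?l1 (G k))"
    by (simp add: algebra_simps)
  moreover have "- real_of_int (c \<bullet> w) \<le> ratio k * ?l1 w" by (rule objective_bound[OF k wk fxw])
  ultimately have "ratio (Suc k) * ?l1 (G (Suc k)) \<le> ratio k * ?l1 (G (Suc k))" using obj by linarith
  then show ?thesis using direction(2)[OF assms] by simp
qed

lemma ratio_antimono: "j \<le> l \<Longrightarrow> l < K \<Longrightarrow> ratio l \<le> ratio j"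
proof (induction l)
  case (Suc l)
  then show ?case using ratio_Suc_le[of l] by (cases "j = Suc l") force+
qed simp

text \<open>While the ratio stays constant, the accumulated step attains the bound of
  objective_bound with equality, which forces the triangle inequality for the l1 norm to be tight.\<close>
lemma constant_ratio_step:
  assumes jl: "j \<le> l" and lK: "l < K" and rl: "ratio l = ratio j"
    and inv: "- real_of_int (c \<bullet> (xs l - xs j)) = ratio j * real_of_int (l1norm (xs l - xs j))"
  shows "- real_of_int (c \<bullet> (xs (Suc l) - xs j)) = ratio j * real_of_int (l1norm (xs (Suc l) - xs j))"
    and "\<forall>p<n. (xs l - xs j) $ p * G l $ p \<ge> 0"
proof -
  let ?l1 = "\<lambda>v. real_of_int (l1norm v)"
  have jK: "j < K" using jl lK by simp
  define v where "v = xs l - xs j"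
  define w where "w = xs (Suc l) - xs j"
  have dims: "dim_vec (xs j) = n" "dim_vec (xs l) = n" "dim_vec (xs (Suc l)) = n" "dim_vec (G l) = n"
    using dim_xs direction(1) jl lK by auto
  have dv: "dim_vec v = n" and dw: "dim_vec w = n" using dims by (auto simp: v_def w_def)
  have we: "\<forall>i<n. w $ i = v $ i + \<alpha> l * G l $ i" using xs_Suc_nth[OF lK] dims by (simp add: v_def w_def)
  have fl: "feasible A b u (xs (Suc l))" using feasible_xs lK by simp
  have wk: "w \<in> int_ker A" unfolding w_def by (rule feasible_diff_in_int_ker[OF A feasible_xs fl]) (use jK in simp)
  have "xs j + w = xs (Suc l)" using dims by (intro eq_vecI) (auto simp: w_def)
  then have bound: "- real_of_int (c \<bullet> w) \<le> ratio j * ?l1 w" using objective_bound[OF jK wk] fl by simp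
  have "c \<bullet> w = c \<bullet> v + \<alpha> l * (c \<bullet> G l)" by (rule scalar_prod_lincomb[OF dw dv dims(4) we])
  then have "- real_of_int (c \<bullet> w) = - real_of_int (c \<bullet> v) + \<alpha> l * (- real_of_int (c \<bullet> G l))"
    by (simp add: algebra_simps)
  also have "\<dots> = ratio j * ?l1 v + \<alpha> l * (ratio l * ?l1 (G l))"
    by (simp only: objective_dir[OF lK] inv[folded v_def])
  finally have obj: "- real_of_int (c \<bullet> w) = ratio j * (?l1 v + \<alpha> l * ?l1 (G l))"
    using rl by (simp add: algebra_simps)
  have tri: "l1norm w \<le> l1norm v + \<alpha> l * l1norm (G l)"
    by (rule l1norm_lincomb_le[OF dw dv dims(4) we]) (use step_length_pos[OF lK] in simp)
  have "?l1 v + \<alpha> l * ?l1 (G l) \<le> ?l1 w"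
    using bound obj step(4)[OF jK] by (simp add: mult_le_cancel_left)
  then have "l1norm v + \<alpha> l * l1norm (G l) \<le> l1norm w" by (metis of_int_add of_int_le_iff of_int_mult)
  then have eq: "l1norm w = l1norm v + \<alpha> l * l1norm (G l)" using tri by simp
  show "- real_of_int (c \<bullet> (xs (Suc l) - xs j)) = ratio j * ?l1 (xs (Suc l) - xs j)"
    using obj eq by (simp add: w_def)
  show "\<forall>p<n. (xs l - xs j) $ p * G l $ p \<ge> 0"
    using l1norm_lincomb_eq_imp_conformal[OF dw dv dims(4) we _ eq] step_length_pos[OF lK] by (simp add: v_def)
qed

lemma constant_ratio_objective:
  "j \<le> l \<Longrightarrow> l \<le> K \<Longrightarrow> (\<forall>i. j \<le> i \<and> i < l \<longrightarrow> ratio i = ratio j) \<Longrightarrow>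
    - real_of_int (c \<bullet> (xs l - xs j)) = ratio j * real_of_int (l1norm (xs l - xs j))"
proof (induction l)
  case 0
  then show ?case using dim_xs[of 0] dim_c by (simp add: l1norm_def scalar_prod_conv_sum[of _ n])
next
  case (Suc l)
  show ?case
  proof (cases "j = Suc l")
    case True
    then show ?thesis using dim_xs[of j] dim_c Suc.prems(2) by (simp add: l1norm_def scalar_prod_conv_sum[of _ n])
  next
    case False
    then have jl: "j \<le> l" and lK: "l < K" using Suc.prems(1,2) by auto
    have const: "\<forall>i. j \<le> i \<and> i < l \<longrightarrow> ratio i = ratio j" using Suc.prems(3) less_SucI by blast
    have "ratio l = ratio j" using Suc.prems(3) jl lessI by blast
    then show ?thesis by (rule constant_ratio_step(1)[OF jl lK _ Suc.IH[OF jl less_imp_le[OF lK] const]])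
  qed
qed

lemma constant_ratio_conformal:
  assumes "j \<le> l" "l < K" "\<forall>i. j \<le> i \<and> i \<le> l \<longrightarrow> ratio i = ratio j"
  shows "\<forall>p<n. (xs l - xs j) $ p * G l $ p \<ge> 0"
proof -
  have "ratio l = ratio j" using assms(1,3) by blast
  moreover have "\<forall>i. j \<le> i \<and> i < l \<longrightarrow> ratio i = ratio j" using assms(3) less_imp_le by blast
  ultimately show ?thesis
    using constant_ratio_step(2)[OF assms(1,2)] constant_ratio_objective[OF assms(1) less_imp_le[OF assms(2)]] by blast
qed

definition blocked :: "nat \<Rightarrow> nat \<Rightarrow> bool" where
  "blocked k p \<longleftrightarrow> \<not> (0 \<le> xs (Suc k) $ p + G k $ p \<and> xs (Suc k) $ p + G k $ p \<le> u $ p)"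

lemma exists_blocked_coord:
  assumes k: "k < K"
  shows "\<exists>p<n. G k $ p \<noteq> 0 \<and> blocked k p"
proof (rule ccontr)
  assume "\<not> ?thesis"
  then have nb: "\<And>p. p < n \<Longrightarrow> G k $ p \<noteq> 0 \<Longrightarrow> \<not> blocked k p" by blast
  have f1: "feasible A b u (xs (Suc k))" using feasible_xs k by simp
  have dims: "dim_vec (xs k) = n" "dim_vec (xs (Suc k)) = n" "dim_vec (G k) = n"
    using dim_xs direction(1) k by auto
  have "0 \<le> xs (Suc k) $ p + G k $ p \<and> xs (Suc k) $ p + G k $ p \<le> u $ p" if p: "p < n" for p
  proof (cases "G k $ p = 0")
    case True
    then show ?thesis using f1 p A by (simp add: feasible_def)
  next
    case False
    then show ?thesis using nb[OF p False] by (simp add: blocked_def)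
  qed
  moreover have "G k \<in> int_ker A" using graver_nonzero[OF A step(1)[OF k]] by simp
  ultimately have "feasible A b u (xs (Suc k) + G k)" using feasible_add_int_ker_iff[OF A f1] by blast
  moreover have "xs (Suc k) + G k = xs k + (\<alpha> k + 1) \<cdot>\<^sub>v G k"
    using xs_Suc_nth[OF k] dims by (intro eq_vecI) (auto simp: algebra_simps)
  ultimately have "\<alpha> k + 1 \<le> \<alpha> k" using step(5)[OF k] by metis
  then show False by simp
qed

text \<open>A blocked coordinate is never used again while the ratio stays constant: by conformality a
  later unit direction would have the same sign at p, then have equal entry, and would leave the box.\<close>
lemma blocked_coord_dir_zero:
  assumes k: "k < K" and p: "p < n" "G k $ p \<noteq> 0" "blocked k p"
    and kl: "k < l" and lK: "l < K" and const: "\<forall>i. k \<le> i \<and> i \<le> l \<longrightarrow> ratio i = ratio k"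
    and frozen: "xs l $ p = xs (Suc k) $ p"
  shows "G l $ p = 0"
proof (rule ccontr)
  assume nz: "G l $ p \<noteq> 0"
  have "(xs l - xs k) $ p * G l $ p \<ge> 0" using constant_ratio_conformal[OF less_imp_le[OF kl] lK const] p(1) by blast
  moreover have "(xs l - xs k) $ p = \<alpha> k * G k $ p"
    using dim_xs[of l] dim_xs[of k] frozen xs_Suc_nth[OF k p(1)] kl lK p by simp
  ultimately have "\<alpha> k * (G k $ p * G l $ p) \<ge> 0" by (simp add: algebra_simps)
  then have "G k $ p * G l $ p \<ge> 0" using step_length_pos[OF k] by (simp add: zero_le_mult_iff)
  moreover have "G k $ p \<in> {-1, 1}" "G l $ p \<in> {-1, 1}" using direction(4)[OF k] direction(4)[OF lK] p nz by auto
  ultimately have same: "G l $ p = G k $ p" by auto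
  have "0 \<le> (xs l + G l) $ p \<and> (xs l + G l) $ p \<le> u $ p"
    using step(2)[OF lK] p A unfolding feasible_def by blast
  moreover have "(xs l + G l) $ p = xs (Suc k) $ p + G k $ p"
    using same frozen p dim_xs[of l] direction(1)[OF lK] lK by simp
  ultimately show False using p(3) by (simp add: blocked_def)
qed

lemma blocked_coord_frozen:
  assumes k: "k < K" and p: "p < n" "G k $ p \<noteq> 0" "blocked k p"
  shows "Suc k \<le> l \<Longrightarrow> l \<le> K \<Longrightarrow> \<forall>i. k \<le> i \<and> i < l \<longrightarrow> ratio i = ratio k \<Longrightarrow>
    xs l $ p = xs (Suc k) $ p"
proof (induction l)
  case (Suc l)
  show ?case
  proof (cases "Suc k = Suc l")
    case False
    then have kl: "Suc k \<le> l" and lK: "l < K" using Suc.prems(1,2) by auto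
    have "\<forall>i. k \<le> i \<and> i < l \<longrightarrow> ratio i = ratio k" using Suc.prems(3) less_SucI by blast
    then have frozen: "xs l $ p = xs (Suc k) $ p" by (rule Suc.IH[OF kl less_imp_le[OF lK]])
    have "\<forall>i. k \<le> i \<and> i \<le> l \<longrightarrow> ratio i = ratio k" using Suc.prems(3) le_imp_less_Suc by blast
    then have "G l $ p = 0" by (rule blocked_coord_dir_zero[OF k p Suc_le_lessD[OF kl] lK _ frozen])
    then show ?thesis using xs_Suc_nth[OF lK p(1)] frozen by simp
  qed simp
qed simp

definition blocking_coord :: "nat \<Rightarrow> nat" where
  "blocking_coord k = (SOME p. p < n \<and> G k $ p \<noteq> 0 \<and> blocked k p)"

lemma blocking_coord:
  assumes "k < K"
  shows "blocking_coord k < n" "G k $ blocking_coord k \<noteq> 0" "blocked k (blocking_coord k)"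
  using someI_ex[OF exists_blocked_coord[OF assms]] unfolding blocking_coord_def by blast+

lemma blocking_coord_inj:
  assumes "j < l" "l < K" "ratio j = ratio l"
  shows "blocking_coord j \<noteq> blocking_coord l"
proof -
  have jK: "j < K" using assms by simp
  have const: "\<forall>i. j \<le> i \<and> i \<le> l \<longrightarrow> ratio i = ratio j"
    using ratio_antimono assms by (metis dual_order.antisym le_less_trans)
  then have "\<forall>i. j \<le> i \<and> i < l \<longrightarrow> ratio i = ratio j" using less_imp_le by blast
  then have "xs l $ blocking_coord j = xs (Suc j) $ blocking_coord j"
    by (rule blocked_coord_frozen[OF jK blocking_coord[OF jK] Suc_leI[OF assms(1)] less_imp_le[OF assms(2)]])
  then have "G l $ blocking_coord j = 0"
    by (rule blocked_coord_dir_zero[OF jK blocking_coord[OF jK] assms(1,2) const])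
  then show ?thesis using blocking_coord(2)[OF assms(2)] by auto
qed

lemma card_steps_with_ratio_le: "card {k. k < K \<and> ratio k = r} \<le> n"
proof -
  let ?I = "{k. k < K \<and> ratio k = r}"
  have "inj_on blocking_coord ?I"
  proof (rule inj_onI, rule ccontr)
    fix j l assume j: "j \<in> ?I" and l: "l \<in> ?I" and eq: "blocking_coord j = blocking_coord l" and "j \<noteq> l"
    then consider "j < l" | "l < j" by linarith
    then show False
      using blocking_coord_inj[of j l] blocking_coord_inj[of l j] j l eq by cases auto
  qed
  moreover have "blocking_coord ` ?I \<subseteq> {..<n}" using blocking_coord(1) by blast
  ultimately show ?thesis using card_inj_on_le[of blocking_coord ?I "{..<n}"] by simp
qed

lemma steps_le_card_ratios: "K \<le> n * card (ratio ` {..<K})"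
proof -
  have "{..<K} = (\<Union>r\<in>ratio ` {..<K}. {k. k < K \<and> ratio k = r})" by blast
  then have "K = card (\<Union>r\<in>ratio ` {..<K}. {k. k < K \<and> ratio k = r})" by (metis card_lessThan)
  also have "\<dots> \<le> (\<Sum>r\<in>ratio ` {..<K}. card {k. k < K \<and> ratio k = r})" by (rule card_UN_le) simp
  also have "\<dots> \<le> (\<Sum>r\<in>ratio ` {..<K}. n)" by (rule sum_mono) (rule card_steps_with_ratio_le)
  finally show ?thesis by (simp add: mult.commute)
qed

end

theorem corollary3:
  fixes A :: "int mat" and b c u :: "int vec" and d n :: nat
    and xs :: "nat \<Rightarrow> int vec" and K :: nat
  assumes "A \<in> carrier_mat d n"
    and "totally_unimodular A"
    and "dim_vec b = d" and "dim_vec c = n" and "dim_vec u = n"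
    and "\<forall>i<n. 0 \<le> u $ i"
    and "feasible A b u (xs 0)"
    and "\<forall>k<K. sd_step A b c u (xs k) (xs (Suc k))"
  shows "K \<le> n * card {r. r > 0 \<and> (\<exists>z \<in> circuits A. r = sd_ratio c z)}
         \<and> (sd_stops A b c u (xs K) \<longrightarrow> optimal A b c u (xs K))"
proof -
  have "\<forall>k<K. \<exists>z \<alpha>. sd_step_by A b c u (xs k) z \<alpha> (xs (Suc k))"
    using assms(8) sd_step_imp_sd_step_by by blast
  then obtain G \<alpha> where "\<forall>k<K. sd_step_by A b c u (xs k) (G k) (\<alpha> k) (xs (Suc k))" by metis
  then interpret sd_run A b c u d n xs K G \<alpha>
    using assms(1,2,4,7) by unfold_locales auto
  let ?R = "{r. r > 0 \<and> (\<exists>z \<in> circuits A. r = sd_ratio c z)}"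
  have "ratio ` {..<K} \<subseteq> ?R" using direction(3) step(4) by blast
  moreover have "finite ?R"
    by (rule finite_subset[of _ "sd_ratio c ` circuits A"]) (use finite_circuits[OF assms(1,2)] in auto)
  ultimately have "card (ratio ` {..<K}) \<le> card ?R" by (rule card_mono[rotated])
  then have "K \<le> n * card ?R" using steps_le_card_ratios by (meson le_trans mult_le_mono2)
  moreover have "sd_stops A b c u (xs K) \<longrightarrow> optimal A b c u (xs K)"
    using sd_stops_imp_optimal[OF assms(1,4) feasible_xs] by blast
  ultimately show ?thesis by blast
qed

end
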